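(* Let $g:\mathbb{R}^n\to\mathbb{R}^m$ be twice continuously differentiable, $K\subseteq\mathbb{R}^m$ closed, $C:=g^{-1}(K)$, $\bar x\in C$, $d\in T_C(\bar x)$, and assume MSCQ holds at $\bar x$ in direction $d$ for the system $g(x)\in K$ with modulus $\kappa$. Then for all $v\in T_C^{''}(\bar x;d)$, $$N_{T_C^{''}(\bar x;d)}(v)\subseteq\{z\mid \exists\lambda\in N_{T_K^{''}(g(\bar x);\nabla g(\bar x)d)}(\nabla g(\bar x)v)\cap\kappa\|z\|B_{\mathbb{R}^m}\text{ with } z=\nabla g(\bar x)^T\lambda\},$$ and for all $w\in T_C^2(\bar x;d)$, $$N_{T_C^{2}(\bar x;d)}(w)\subseteq\{z\mid \exists\lambda\in N_{T_K^{2}(g(\bar x);\nabla g(\bar x)d)}(\nabla g(\bar x)w+\nabla^2g(\bar x)(d,d))\cap\kappa\|z\|B_{\mathbb{R}^m}\text{ with } z=\nabla g(\bar x)^T\lambda\}.$$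
   Context: $N_A$ denotes the limiting (Mordukhovich) normal cone. $T_S^2(\bar x;d):=\{w\mid \exists t_k\downarrow 0,\ w_k\to w,\ \bar x+t_kd+\tfrac12 t_k^2w_k\in S\}$; $T_S^{''}(\bar x;d):=\{w\mid \exists (t_k,r_k)\downarrow(0,0),\ w_k\to w,\ t_k/r_k\to0,\ \bar x+t_kd+\tfrac12 t_kr_kw_k\in S\}$. $\nabla^2g(\bar x)(d,d):=(d^T\nabla^2g_i(\bar x)d)_{i=1}^m$. Directional neighborhood $V_{\rho,\delta}(d):=\{w\in\delta B_{\mathbb{R}^n}\mid \|\,\|d\|w-\|w\|d\,\|\le\rho\|w\|\|d\|\}$. MSCQ at $\bar x$ in direction $d$ means there are $\rho,\delta,\kappa>0$ with $\mathrm{dist}(x,g^{-1}(K))\le\kappa\,\mathrm{dist}(g(x),K)$ for all $x\in\bar x+V_{\rho,\delta}(d)$; the modulus is the infimum of such $\kappa$. *)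

theory Defs
  imports "HOL-Analysis.Analysis"
begin

definition tangent_cone :: "'a::real_normed_vector set \<Rightarrow> 'a \<Rightarrow> 'a set" where
  "tangent_cone S x = {d. \<exists>t u. (\<forall>k. t k > 0) \<and> t \<longlonglongrightarrow> 0 \<and> u \<longlonglongrightarrow> d
      \<and> (\<forall>k. x + t k *\<^sub>R u k \<in> S)}"

definition second_tangent_set :: "'a::real_normed_vector set \<Rightarrow> 'a \<Rightarrow> 'a \<Rightarrow> 'a set" where
  "second_tangent_set S x d = {w. \<exists>t w'. (\<forall>k. t k > 0) \<and> t \<longlonglongrightarrow> 0 \<and> w' \<longlonglongrightarrow> w
      \<and> (\<forall>k. x + t k *\<^sub>R d + (1/2 * (t k)\<^sup>2) *\<^sub>R w' k \<in> S)}"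

definition asym_second_tangent_cone :: "'a::real_normed_vector set \<Rightarrow> 'a \<Rightarrow> 'a \<Rightarrow> 'a set" where
  "asym_second_tangent_cone S x d = {w. \<exists>t r w'. (\<forall>k. t k > 0) \<and> (\<forall>k. r k > 0)
      \<and> t \<longlonglongrightarrow> 0 \<and> r \<longlonglongrightarrow> 0 \<and> (\<lambda>k. t k / r k) \<longlonglongrightarrow> 0 \<and> w' \<longlonglongrightarrow> w
      \<and> (\<forall>k. x + t k *\<^sub>R d + (1/2 * t k * r k) *\<^sub>R w' k \<in> S)}"

definition regular_normal_cone :: "'a::real_inner set \<Rightarrow> 'a \<Rightarrow> 'a set" where
  "regular_normal_cone S x = (if x \<in> S then {v. \<forall>\<epsilon>>0. \<exists>\<delta>>0. \<forall>y\<in>S.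
      norm (y - x) < \<delta> \<longrightarrow> inner v (y - x) \<le> \<epsilon> * norm (y - x)} else {})"

definition limiting_normal_cone :: "'a::real_inner set \<Rightarrow> 'a \<Rightarrow> 'a set" where
  "limiting_normal_cone S x = (if x \<in> S then {v. \<exists>xs vs. (\<forall>k. xs k \<in> S) \<and> xs \<longlonglongrightarrow> x
      \<and> vs \<longlonglongrightarrow> v \<and> (\<forall>k. vs k \<in> regular_normal_cone S (xs k))} else {})"

definition dir_nbhd :: "real \<Rightarrow> real \<Rightarrow> 'a::real_normed_vector \<Rightarrow> 'a set" where
  "dir_nbhd \<rho> \<delta> d = {w \<in> cball 0 \<delta>. norm (norm d *\<^sub>R w - norm w *\<^sub>R d) \<le> \<rho> * norm w * norm d}"

definition mscq_constants :: "('a::real_normed_vector \<Rightarrow> 'b::real_normed_vector) \<Rightarrow> 'b set \<Rightarrow> 'a \<Rightarrow> 'a \<Rightarrow> real set" where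
  "mscq_constants g K xbar d = {\<kappa>. \<kappa> > 0 \<and> (\<exists>\<rho>>0. \<exists>\<delta>>0. \<forall>w\<in>dir_nbhd \<rho> \<delta> d.
      infdist (xbar + w) (g -` K) \<le> \<kappa> * infdist (g (xbar + w)) K)}"

definition mscq_dir :: "('a::real_normed_vector \<Rightarrow> 'b::real_normed_vector) \<Rightarrow> 'b set \<Rightarrow> 'a \<Rightarrow> 'a \<Rightarrow> bool" where
  "mscq_dir g K xbar d \<longleftrightarrow> mscq_constants g K xbar d \<noteq> {}"

definition mscq_modulus :: "('a::real_normed_vector \<Rightarrow> 'b::real_normed_vector) \<Rightarrow> 'b set \<Rightarrow> 'a \<Rightarrow> 'a \<Rightarrow> real" where
  "mscq_modulus g K xbar d = Inf (mscq_constants g K xbar d)"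

end

theory Submission
  imports Defs
begin

text \<open>Write \<open>C = g\<^sup>-\<^sup>1(K)\<close>, \<open>A = \<nabla>g(x)\<close> and \<open>b = 0\<close> (for \<open>T''\<close>) or
  \<open>b = \<nabla>\<^sup>2g(x)(d,d)\<close> (for \<open>T\<^sup>2\<close>). A second-order Taylor expansion along the defining sequences shows that
  \<open>y \<mapsto> A y + b\<close> maps the second-order set of C into that of K, and directional MSCQ with any
  admissible constant \<open>\<kappa>'\<close> becomes a global error bound
  \<open>dist(y, T\<^sub>C) \<le> \<kappa>' dist(A y + b, T\<^sub>K)\<close>: realise the nearest point of \<open>T\<^sub>K\<close> by a sequence,
  project the matching points onto C and pass to a convergent subsequence of the rescaled
  displacements.

  For closed sets S and Q with \<open>A S + b \<subseteq> Q\<close> and such an error bound, every limiting normal z of S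
  is \<open>A\<^sup>T \<lambda>\<close> for a limiting normal \<open>\<lambda>\<close> of Q at the image point with \<open>|\<lambda>| \<le> \<kappa>' |z|\<close>. For proximal
  normals this follows from the stationarity condition of a smoothed exact penalty; it passes to
  regular normals, which are limits of proximal normals at nearest points, and then to limiting
  normals by closedness of the graph of the limiting normal cone. Letting \<open>\<kappa>'\<close> decrease to the
  MSCQ modulus gives the bound with \<open>\<kappa>\<close>.\<close>

section \<open>Limiting normals under an affine error bound\<close>

lemma regular_normal_cone_subset_limiting:
  "regular_normal_cone S x \<subseteq> limiting_normal_cone S x"
proof
  fix v assume v: "v \<in> regular_normal_cone S x"
  then have "x \<in> S" unfolding regular_normal_cone_def by (auto split: if_splits)
  with v show "v \<in> limiting_normal_cone S x"
    unfolding limiting_normal_cone_def if_P[OF \<open>x \<in> S\<close>]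
    by (intro CollectI exI[of _ "\<lambda>_. x"] exI[of _ "\<lambda>_. v"]) simp
qed

lemma limiting_normal_cone_eq_closure:
  "limiting_normal_cone S x = {v. x \<in> S \<and> (x, v) \<in> closure (Sigma S (regular_normal_cone S))}"
proof -
  have "(\<exists>xs vs. (\<forall>k. xs k \<in> S) \<and> xs \<longlonglongrightarrow> x \<and> vs \<longlonglongrightarrow> v \<and> (\<forall>k. vs k \<in> regular_normal_cone S (xs k)))
      \<longleftrightarrow> (\<exists>X. (\<forall>k. X k \<in> Sigma S (regular_normal_cone S)) \<and> X \<longlonglongrightarrow> (x, v))" (is "?seqs \<longleftrightarrow> ?pairs")
    for v
  proof
    assume ?seqs
    then obtain xs vs where "\<forall>k. xs k \<in> S" "xs \<longlonglongrightarrow> x" "vs \<longlonglongrightarrow> v"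
      "\<forall>k. vs k \<in> regular_normal_cone S (xs k)" by blast
    then show ?pairs
      by (intro exI[of _ "\<lambda>k. (xs k, vs k)"]) (auto intro: tendsto_Pair)
  next
    assume ?pairs
    then obtain X where X: "\<forall>k. X k \<in> Sigma S (regular_normal_cone S)" "X \<longlonglongrightarrow> (x, v)" by blast
    with tendsto_fst[OF X(2)] tendsto_snd[OF X(2)] show ?seqs
      by - (rule exI[of _ "\<lambda>k. fst (X k)"], rule exI[of _ "\<lambda>k. snd (X k)"],
            auto, (metis mem_Sigma_iff prod.collapse)+)
  qed
  then show ?thesis
    unfolding limiting_normal_cone_def closure_sequential by (cases "x \<in> S") simp_all
qed

lemma limiting_normal_cone_closed_graph:
  assumes "closed S" and "p \<longlonglongrightarrow> p0" and "u \<longlonglongrightarrow> u0"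
    and "\<And>k. u k \<in> limiting_normal_cone S (p k)"
  shows "u0 \<in> limiting_normal_cone S p0"
proof -
  let ?G = "Sigma S (regular_normal_cone S)"
  have mem: "p k \<in> S \<and> (p k, u k) \<in> closure ?G" for k
    using assms(4) by (simp add: limiting_normal_cone_eq_closure)
  have "p0 \<in> S"
    using mem by (intro closed_sequentially[OF \<open>closed S\<close> _ \<open>p \<longlonglongrightarrow> p0\<close>]) simp
  moreover have "(p0, u0) \<in> closure ?G"
    using mem
    by (intro closed_sequentially[OF closed_closure _ tendsto_Pair[OF \<open>p \<longlonglongrightarrow> p0\<close> \<open>u \<longlonglongrightarrow> u0\<close>]]) simp
  ultimately show ?thesis by (simp add: limiting_normal_cone_eq_closure)
qed

lemma adjoint_image_limiting_normal_limit:
  fixes A :: "'a::euclidean_space \<Rightarrow> 'b::euclidean_space"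
  assumes "linear A" and "closed Q" and p: "p \<longlonglongrightarrow> p0" and r: "r \<longlonglongrightarrow> r0" and u: "u \<longlonglongrightarrow> u0"
    and mem: "\<And>k. u k \<in> adjoint A ` (limiting_normal_cone Q (p k) \<inter> cball 0 (r k))"
  shows "u0 \<in> adjoint A ` (limiting_normal_cone Q p0 \<inter> cball 0 r0)"
proof -
  have "\<exists>l. l \<in> limiting_normal_cone Q (p k) \<and> norm l \<le> r k \<and> u k = adjoint A l" for k
    using mem[of k] by (elim imageE IntE) (auto simp: mem_cball_0)
  then obtain l where l: "\<And>k. l k \<in> limiting_normal_cone Q (p k)" "\<And>k. norm (l k) \<le> r k"
    "\<And>k. u k = adjoint A (l k)"
    by metis
  obtain B where B: "\<And>k. norm (r k) \<le> B"
    using BseqE[OF convergent_imp_Bseq[OF convergentI[OF r]]] by blast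
  have "norm (l k) \<le> B" for k
    using l(2)[of k] B[of k] abs_ge_self[of "r k"] by simp
  then have "bounded (range l)"
    unfolding bounded_iff by blast
  then obtain l0 \<phi> where \<phi>: "strict_mono \<phi>" "(l \<circ> \<phi>) \<longlonglongrightarrow> l0"
    using bounded_imp_convergent_subsequence by blast
  have "l0 \<in> limiting_normal_cone Q p0"
    using limiting_normal_cone_closed_graph[OF \<open>closed Q\<close> LIMSEQ_subseq_LIMSEQ[OF p \<phi>(1)] \<phi>(2)] l(1)
    by simp
  moreover have "norm l0 \<le> r0"
    using LIMSEQ_le[OF tendsto_norm[OF \<phi>(2)] LIMSEQ_subseq_LIMSEQ[OF r \<phi>(1)]] l(2) by auto
  moreover have "u0 = adjoint A l0"
  proof (rule LIMSEQ_unique[OF LIMSEQ_subseq_LIMSEQ[OF u \<phi>(1)]])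
    have "bounded_linear (adjoint A)"
      using adjoint_linear[OF \<open>linear A\<close>] linear_conv_bounded_linear by blast
    from bounded_linear.tendsto[OF this \<phi>(2)] show "(u \<circ> \<phi>) \<longlonglongrightarrow> adjoint A l0"
      by (simp add: o_def l(3))
  qed
  ultimately show ?thesis by auto
qed

lemma proximal_normal_imp_regular:
  fixes u :: "'a::real_inner"
  assumes "v \<in> S" and "c \<ge> 0" and prox: "\<And>y. y \<in> S \<Longrightarrow> inner u (y - v) \<le> c * (norm (y - v))\<^sup>2"
  shows "u \<in> regular_normal_cone S v"
  unfolding regular_normal_cone_def
proof (simp add: \<open>v \<in> S\<close>, intro allI impI)
  fix e :: real assume "0 < e"
  show "\<exists>\<delta>>0. \<forall>y\<in>S. norm (y - v) < \<delta> \<longrightarrow> inner u (y - v) \<le> e * norm (y - v)"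
  proof (intro exI[of _ "e / (c + 1)"] conjI ballI impI)
    show "0 < e / (c + 1)" using \<open>0 < e\<close> \<open>c \<ge> 0\<close> by simp
    fix y assume "y \<in> S" and y: "norm (y - v) < e / (c + 1)"
    have "c * norm (y - v) \<le> (c + 1) * norm (y - v)" by (simp add: distrib_right)
    also have "\<dots> \<le> e" using y \<open>c \<ge> 0\<close> by (simp add: field_simps)
    finally have "c * norm (y - v) \<le> e" .
    then have "c * (norm (y - v))\<^sup>2 \<le> e * norm (y - v)"
      by (simp add: power2_eq_square mult.assoc[symmetric] mult_right_mono)
    with prox[OF \<open>y \<in> S\<close>] show "inner u (y - v) \<le> e * norm (y - v)" by linarith
  qed
qed

lemma nearest_point_inner_le:
  fixes p w q :: "'a::real_inner"
  assumes "dist p w \<le> dist p q"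
  shows "inner (p - w) (q - w) \<le> (norm (q - w))\<^sup>2 / 2"
proof -
  have "(norm (p - w))\<^sup>2 \<le> (norm ((p - w) - (q - w)))\<^sup>2"
    using assms by (simp add: dist_norm)
  then show ?thesis
    by (simp add: power2_norm_eq_inner inner_diff_left inner_diff_right inner_commute)
qed

lemma nearest_point_regular_normal:
  fixes p :: "'a::real_inner"
  assumes "w \<in> Q" and nearest: "\<And>q. q \<in> Q \<Longrightarrow> dist p w \<le> dist p q" and "a \<ge> 0"
  shows "a *\<^sub>R (p - w) \<in> regular_normal_cone Q w"
proof (rule proximal_normal_imp_regular[OF \<open>w \<in> Q\<close>])
  show "0 \<le> a / 2" using \<open>a \<ge> 0\<close> by simp
  fix q assume "q \<in> Q"
  from mult_left_mono[OF nearest_point_inner_le[OF nearest[OF this]] \<open>a \<ge> 0\<close>]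
  show "inner (a *\<^sub>R (p - w)) (q - w) \<le> a / 2 * (norm (q - w))\<^sup>2" by simp
qed

lemma smoothed_distance_penalty_stationary:
  fixes A :: "'a::euclidean_space \<Rightarrow> 'b::euclidean_space" and b w :: 'b and u v y :: 'a
    and L s c :: real
  defines "G \<equiv> \<lambda>y'. L * sqrt ((norm (A y' + b - w))\<^sup>2 + s\<^sup>2) - inner u (y' - v) + c * (norm (y' - v))\<^sup>2"
    and "D \<equiv> sqrt ((norm (A y + b - w))\<^sup>2 + s\<^sup>2)"
  assumes "linear A" and "s > 0" and min: "eventually (\<lambda>y'. G y \<le> G y') (at y)"
  shows "adjoint A ((L / D) *\<^sub>R (A y + b - w)) = u - (2 * c) *\<^sub>R (y - v)"
proof -
  have pos: "inner (A y + b - w) (A y + b - w) + s\<^sup>2 > 0"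
    using \<open>s > 0\<close> by (simp add: add_nonneg_pos)
  have G_eq: "G = (\<lambda>y'. L * sqrt (inner (A y' + b - w) (A y' + b - w) + s\<^sup>2)
                        - inner u (y' - v) + c * inner (y' - v) (y' - v))"
    by (simp add: G_def power2_norm_eq_inner)
  have "(G has_derivative (\<lambda>h. L * (inner (A y + b - w) (A h) / D) - inner u h + c * (2 * inner (y - v) h))) (at y)"
    unfolding G_eq D_def power2_norm_eq_inner
    using pos linear_conv_bounded_linear[THEN iffD1, OF \<open>linear A\<close>]
    by (auto intro!: derivative_eq_intros bounded_linear_imp_has_derivative
             simp: inner_commute field_simps)
  from has_derivative_local_min[OF this min]
  have zero: "L * (inner (A y + b - w) (A h) / D) - inner u h + c * (2 * inner (y - v) h) = 0" for h
    by (metis (mono_tags))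
  define l where "l = (L / D) *\<^sub>R (A y + b - w)"
  have "inner h (adjoint A l - (u - (2 * c) *\<^sub>R (y - v))) = 0" for h
  proof -
    have "inner h (adjoint A l) = L * (inner (A y + b - w) (A h) / D)"
      by (simp add: adjoint_works[OF \<open>linear A\<close>] l_def inner_commute)
    with zero[of h] show ?thesis by (simp add: inner_diff_right inner_commute algebra_simps)
  qed
  from this[of "adjoint A l - (u - (2 * c) *\<^sub>R (y - v))"] show ?thesis
    by (simp add: l_def)
qed

lemma nearest_point_displacement_bound:
  fixes u v y :: "'a::real_inner"
  assumes nearest: "dist (v + t *\<^sub>R u) y \<le> dist (v + t *\<^sub>R u) v" and "t > 0"
    and "\<epsilon> \<ge> 0" and component: "inner u (y - v) \<le> \<epsilon> * norm (y - v)"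
  shows "norm (y - v) \<le> 2 * t * \<epsilon>"
proof (cases "y = v")
  case False
  have "(norm (t *\<^sub>R u + (v - y)))\<^sup>2 \<le> (norm (t *\<^sub>R u))\<^sup>2"
    using nearest by (intro power_mono) (simp_all add: dist_norm algebra_simps)
  then have "(norm (y - v))\<^sup>2 \<le> 2 * t * inner u (y - v)"
    unfolding power2_norm_eq_inner
    by (simp add: inner_add_left inner_add_right inner_diff_left inner_diff_right inner_commute algebra_simps)
  also have "\<dots> \<le> (2 * t * \<epsilon>) * norm (y - v)"
    using mult_left_mono[OF component, of "2 * t"] \<open>t > 0\<close> by (simp add: mult_ac)
  finally show ?thesis
    using False by (simp add: power2_eq_square)
qed (use assms in simp)

lemma regular_normal_proximal_approx:
  fixes u :: "'a::euclidean_space"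
  assumes "closed S" and u: "u \<in> regular_normal_cone S v"
  obtains Y U c where "\<And>k. Y k \<in> S" "Y \<longlonglongrightarrow> v" "U \<longlonglongrightarrow> u" "\<And>k. c k \<ge> 0"
    "\<And>k y. y \<in> S \<Longrightarrow> inner (U k) (y - Y k) \<le> c k * (norm (y - Y k))\<^sup>2"
proof -
  have "v \<in> S" using u by (simp add: regular_normal_cone_def split: if_splits)
  with u have reg: "\<forall>\<epsilon>>0. \<exists>\<delta>>0. \<forall>y\<in>S. norm (y - v) < \<delta> \<longrightarrow> inner u (y - v) \<le> \<epsilon> * norm (y - v)"
    by (simp add: regular_normal_cone_def)
  define t where "t k = 1 / real (Suc k)" for k
  have t: "t k > 0" "real (Suc k) * t k = 1" for k by (simp_all add: t_def)
  have "\<exists>y\<in>S. infdist (v + t k *\<^sub>R u) S = dist (v + t k *\<^sub>R u) y" for k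
    using infdist_attains_inf[OF \<open>closed S\<close>] \<open>v \<in> S\<close> by blast
  then obtain Y where Y: "\<And>k. Y k \<in> S" "\<And>k. infdist (v + t k *\<^sub>R u) S = dist (v + t k *\<^sub>R u) (Y k)"
    by metis
  have nearest: "dist (v + t k *\<^sub>R u) (Y k) \<le> dist (v + t k *\<^sub>R u) y" if "y \<in> S" for k y
    using infdist_le[OF that] Y(2) by metis
  note Y_bound = nearest_point_displacement_bound[OF nearest[OF \<open>v \<in> S\<close>] t(1)]
  define U where "U k = real (Suc k) *\<^sub>R (v + t k *\<^sub>R u - Y k)" for k
  have "Y \<longlonglongrightarrow> v"
  proof -
    have "(\<lambda>k. Y k - v) \<longlonglongrightarrow> 0"
    proof (rule Lim_null_comparison)
      show "\<forall>\<^sub>F k in sequentially. norm (Y k - v) \<le> 2 * t k * norm u"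
        using Y_bound norm_cauchy_schwarz norm_ge_zero by (intro always_eventually allI) blast
      have "t \<longlonglongrightarrow> 0"
        unfolding t_def by (rule LIMSEQ_inverse_real_of_nat[unfolded inverse_eq_divide])
      from tendsto_mult[OF tendsto_mult[OF tendsto_const this] tendsto_const, of 2 "norm u"]
      show "(\<lambda>k. 2 * t k * norm u) \<longlonglongrightarrow> 0" by simp
    qed
    then show ?thesis by (simp add: LIM_zero_iff)
  qed
  moreover have "U \<longlonglongrightarrow> u"
  proof (rule tendstoI)
    fix e :: real assume "e > 0"
    from reg[rule_format, of "e / 4"] \<open>e > 0\<close> obtain \<delta> where "\<delta> > 0"
      and \<delta>: "\<And>y. y \<in> S \<Longrightarrow> norm (y - v) < \<delta> \<Longrightarrow> inner u (y - v) \<le> e / 4 * norm (y - v)"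
      by auto
    from tendstoD[OF \<open>Y \<longlonglongrightarrow> v\<close> \<open>\<delta> > 0\<close>]
    show "eventually (\<lambda>k. dist (U k) u < e) sequentially"
    proof eventually_elim
      case (elim k)
      then have "norm (Y k - v) \<le> 2 * t k * (e / 4)"
        using Y_bound[of "e / 4" k] \<delta>[OF Y(1)] \<open>e > 0\<close> by (simp add: dist_norm)
      moreover have "U k - u = real (Suc k) *\<^sub>R (v - Y k)"
        using t(2)[of k] by (simp add: U_def algebra_simps)
      ultimately have "dist (U k) u \<le> real (Suc k) * (2 * t k * (e / 4))"
        by (simp add: dist_norm norm_minus_commute)
      also have "\<dots> = e / 2" using t(2)[of k] by (simp add: algebra_simps)
      finally show ?case using \<open>e > 0\<close> by simp
    qed
  qed
  moreover have "inner (U k) (y - Y k) \<le> real (Suc k) / 2 * (norm (y - Y k))\<^sup>2" if "y \<in> S" for k y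
    using mult_left_mono[OF nearest_point_inner_le[OF nearest[OF that]], of "real (Suc k)"]
    by (simp add: U_def)
  ultimately show ?thesis
    using that[of Y U "\<lambda>k. real (Suc k) / 2"] Y(1) by simp
qed

locale affine_error_bound =
  fixes A :: "'a::euclidean_space \<Rightarrow> 'b::euclidean_space" and b :: 'b
    and S :: "'a set" and Q :: "'b set" and \<kappa> :: real
  assumes linear: "linear A"
    and closed_S: "closed S" and closed_Q: "closed Q"
    and maps_into: "\<And>y. y \<in> S \<Longrightarrow> A y + b \<in> Q"
    and nonneg: "0 \<le> \<kappa>"
    and error_bound: "\<And>y. infdist y S \<le> \<kappa> * infdist (A y + b) Q"
begin

lemma tendsto_affine: "y \<longlonglongrightarrow> v \<Longrightarrow> (\<lambda>k. A (y k) + b) \<longlonglongrightarrow> A v + b"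
  using bounded_linear.tendsto[OF linear_conv_bounded_linear[THEN iffD1, OF linear]]
  by (rule tendsto_add[OF _ tendsto_const])

lemma proximal_inner_estimate:
  assumes "v \<in> S" and "c \<ge> 0" and prox: "\<And>y. y \<in> S \<Longrightarrow> inner u (y - v) \<le> c * (norm (y - v))\<^sup>2"
  shows "inner u (y - v) \<le> \<kappa> * norm u * infdist (A y + b) Q + 4 * c * (norm (y - v))\<^sup>2"
proof -
  obtain p where "p \<in> S" and p: "infdist y S = dist y p"
    using infdist_attains_inf[OF closed_S] \<open>v \<in> S\<close> by blast
  have "norm (p - y) \<le> norm (y - v)"
    using infdist_le[OF \<open>v \<in> S\<close>, of y] p by (simp add: dist_norm norm_minus_commute)
  then have "norm (p - v) \<le> 2 * norm (y - v)"
    using norm_triangle_ineq[of "p - y" "y - v"] by simp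
  then have "c * (norm (p - v))\<^sup>2 \<le> 4 * c * (norm (y - v))\<^sup>2"
    using mult_left_mono[OF power_mono[of "norm (p - v)" "2 * norm (y - v)" 2] \<open>c \<ge> 0\<close>]
    by (simp add: power_mult_distrib)
  moreover have "norm u * norm (y - p) \<le> \<kappa> * norm u * infdist (A y + b) Q"
    using mult_left_mono[OF error_bound[of y] norm_ge_zero[of u]] p
    by (simp add: dist_norm mult_ac)
  moreover have "inner u (y - v) = inner u (y - p) + inner u (p - v)"
    by (simp add: inner_diff_right)
  ultimately show ?thesis
    using norm_cauchy_schwarz[of u "y - p"] prox[OF \<open>p \<in> S\<close>] by linarith
qed

text \<open>A smoothed exact penalisation: y minimises
  \<open>\<kappa> |u| sqrt(dist(A y + b, Q)\<^sup>2 + s\<^sup>2) - \<langle>u, y - v\<rangle> + (4c + 1)|y - v|\<^sup>2\<close> over the unit ball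
  around v, and freezing the nearest point w of Q keeps y a local minimiser of a smooth majorant.\<close>
lemma smoothed_penalty_local_min:
  assumes "v \<in> S" and "c \<ge> 0" and prox: "\<And>y. y \<in> S \<Longrightarrow> inner u (y - v) \<le> c * (norm (y - v))\<^sup>2"
    and "s > 0" and small: "\<kappa> * norm u * s < 1/4"
  obtains y w where "(norm (y - v))\<^sup>2 \<le> \<kappa> * norm u * s" and "w \<in> Q"
    and "\<And>q. q \<in> Q \<Longrightarrow> dist (A y + b) w \<le> dist (A y + b) q"
    and "eventually (\<lambda>y'. \<kappa> * norm u * sqrt ((norm (A y + b - w))\<^sup>2 + s\<^sup>2) - inner u (y - v)
            + (4 * c + 1) * (norm (y - v))\<^sup>2
          \<le> \<kappa> * norm u * sqrt ((norm (A y' + b - w))\<^sup>2 + s\<^sup>2) - inner u (y' - v)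
            + (4 * c + 1) * (norm (y' - v))\<^sup>2) (at y)"
proof -
  define L where "L = \<kappa> * norm u"
  have "L \<ge> 0" using nonneg by (simp add: L_def)
  define F where
    "F y = L * sqrt ((infdist (A y + b) Q)\<^sup>2 + s\<^sup>2) - inner u (y - v) + (4 * c + 1) * (norm (y - v))\<^sup>2" for y
  have "continuous_on UNIV A"
    using linear_continuous_on linear_conv_bounded_linear linear by blast
  then have "continuous_on (cball v 1) F"
    unfolding F_def by (auto intro!: continuous_intros elim: continuous_on_subset)
  from continuous_attains_inf[OF compact_cball _ this]
  obtain y where y_min: "\<And>y'. y' \<in> cball v 1 \<Longrightarrow> F y \<le> F y'"
    by (metis centre_in_cball empty_iff zero_le_one)
  have "(norm (y - v))\<^sup>2 \<le> F y"
  proof -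
    have "L * infdist (A y + b) Q \<le> L * sqrt ((infdist (A y + b) Q)\<^sup>2 + s\<^sup>2)"
      by (intro mult_left_mono real_le_rsqrt \<open>L \<ge> 0\<close>) simp
    then show ?thesis
      using proximal_inner_estimate[OF \<open>v \<in> S\<close> \<open>c \<ge> 0\<close> prox, of y]
      by (simp add: F_def L_def algebra_simps)
  qed
  also have "F y \<le> L * s"
    using y_min[of v] maps_into[OF \<open>v \<in> S\<close>] \<open>s > 0\<close> by (simp add: F_def)
  finally have close: "(norm (y - v))\<^sup>2 \<le> L * s" .
  have "norm (y - v) < 1"
  proof (rule ccontr)
    assume "\<not> norm (y - v) < 1"
    then have "1 \<le> (norm (y - v))\<^sup>2" by (simp add: one_le_power)
    with close small show False by (simp add: L_def)
  qed
  obtain w where "w \<in> Q" and w: "infdist (A y + b) Q = dist (A y + b) w"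
    using infdist_attains_inf[OF closed_Q] maps_into[OF \<open>v \<in> S\<close>] by blast
  define G where
    "G y' = L * sqrt ((norm (A y' + b - w))\<^sup>2 + s\<^sup>2) - inner u (y' - v) + (4 * c + 1) * (norm (y' - v))\<^sup>2" for y'
  have F_le_G: "F y' \<le> G y'" for y'
  proof -
    have "(infdist (A y' + b) Q)\<^sup>2 \<le> (norm (A y' + b - w))\<^sup>2"
      using infdist_le[OF \<open>w \<in> Q\<close>] by (intro power_mono) (auto simp: dist_norm infdist_nonneg)
    then show ?thesis
      unfolding F_def G_def using \<open>L \<ge> 0\<close> by (simp add: mult_left_mono)
  qed
  have "G y = F y" using w by (simp add: F_def G_def dist_norm)
  have "eventually (\<lambda>y'. y' \<in> ball v 1) (at y)"
    using \<open>norm (y - v) < 1\<close> by (intro eventually_at_in_open') (auto simp: dist_norm norm_minus_commute)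
  then have "eventually (\<lambda>y'. G y \<le> G y') (at y)"
  proof eventually_elim
    case (elim y')
    then have "F y \<le> F y'" using y_min by simp
    with F_le_G[of y'] \<open>G y = F y\<close> show ?case by simp
  qed
  moreover have "dist (A y + b) w \<le> dist (A y + b) q" if "q \<in> Q" for q
    using infdist_le[OF that, of "A y + b"] w by simp
  ultimately show ?thesis
    using that[of y w] close \<open>w \<in> Q\<close> unfolding G_def L_def by blast
qed

lemma proximal_normal_penalty_step:
  assumes "v \<in> S" and "c \<ge> 0" and prox: "\<And>y. y \<in> S \<Longrightarrow> inner u (y - v) \<le> c * (norm (y - v))\<^sup>2"
    and "s > 0" and small: "\<kappa> * norm u * s < 1/4"
  obtains y w where "(norm (y - v))\<^sup>2 \<le> \<kappa> * norm u * s"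
    and "dist w (A v + b) \<le> 2 * norm (A (y - v))"
    and "u - (2 * (4 * c + 1)) *\<^sub>R (y - v) \<in> adjoint A ` (limiting_normal_cone Q w \<inter> cball 0 (\<kappa> * norm u))"
proof -
  define L where "L = \<kappa> * norm u"
  have "L \<ge> 0" using nonneg by (simp add: L_def)
  obtain y w where close: "(norm (y - v))\<^sup>2 \<le> L * s" and "w \<in> Q"
    and nearest: "\<And>q. q \<in> Q \<Longrightarrow> dist (A y + b) w \<le> dist (A y + b) q"
    and local_min: "eventually (\<lambda>y'. L * sqrt ((norm (A y + b - w))\<^sup>2 + s\<^sup>2) - inner u (y - v)
            + (4 * c + 1) * (norm (y - v))\<^sup>2
          \<le> L * sqrt ((norm (A y' + b - w))\<^sup>2 + s\<^sup>2) - inner u (y' - v)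
            + (4 * c + 1) * (norm (y' - v))\<^sup>2) (at y)"
    using smoothed_penalty_local_min[OF assms] unfolding L_def by blast
  define D where "D = sqrt ((norm (A y + b - w))\<^sup>2 + s\<^sup>2)"
  have "D > 0" using \<open>s > 0\<close> by (simp add: D_def add_nonneg_pos)
  define l where "l = (L / D) *\<^sub>R (A y + b - w)"
  have "adjoint A l = u - (2 * (4 * c + 1)) *\<^sub>R (y - v)"
    using smoothed_distance_penalty_stationary[OF linear \<open>s > 0\<close> local_min] by (simp add: D_def l_def)
  moreover have "l \<in> limiting_normal_cone Q w"
    unfolding l_def using \<open>L \<ge> 0\<close> \<open>D > 0\<close> nearest
    by (intro subsetD[OF regular_normal_cone_subset_limiting] nearest_point_regular_normal \<open>w \<in> Q\<close>) auto
  moreover have "norm l \<le> L"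
  proof -
    have "norm (A y + b - w) \<le> D"
      unfolding D_def by (rule real_le_rsqrt) simp
    then have "L / D * norm (A y + b - w) \<le> L / D * D"
      using \<open>L \<ge> 0\<close> \<open>D > 0\<close> by (intro mult_left_mono) auto
    then show ?thesis
      using \<open>L \<ge> 0\<close> \<open>D > 0\<close> by (simp add: l_def)
  qed
  moreover have "dist w (A v + b) \<le> 2 * norm (A (y - v))"
    using nearest[OF maps_into[OF \<open>v \<in> S\<close>]] dist_triangle[of w "A v + b" "A y + b"]
      linear_diff[OF linear, of y v]
    by (simp add: dist_norm norm_minus_commute)
  ultimately show ?thesis
    using that[of y w] close unfolding L_def by (metis IntI image_eqI mem_cball_0)
qed

lemma proximal_normal:
  assumes "v \<in> S" and "c \<ge> 0" and prox: "\<And>y. y \<in> S \<Longrightarrow> inner u (y - v) \<le> c * (norm (y - v))\<^sup>2"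
  shows "u \<in> adjoint A ` (limiting_normal_cone Q (A v + b) \<inter> cball 0 (\<kappa> * norm u))"
proof -
  define L where "L = \<kappa> * norm u"
  have "L \<ge> 0" using nonneg by (simp add: L_def)
  define s where "s k = 1 / (4 * (L + 1)) * (1 / real (Suc k))" for k
  have s_pos: "s k > 0" for k using \<open>L \<ge> 0\<close> by (simp add: s_def)
  have small: "L * s k < 1/4" for k
  proof -
    have "L * s k = L / (4 * (L + 1)) * (1 / real (Suc k))" by (simp add: s_def)
    also have "\<dots> \<le> L / (4 * (L + 1))"
      using \<open>L \<ge> 0\<close> by (intro mult_left_le) simp_all
    also have "\<dots> < 1/4" using \<open>L \<ge> 0\<close> by (simp add: field_simps)
    finally show ?thesis .
  qed
  then have "\<exists>y w. (norm (y - v))\<^sup>2 \<le> L * s k \<and> dist w (A v + b) \<le> 2 * norm (A (y - v))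
      \<and> u - (2 * (4 * c + 1)) *\<^sub>R (y - v) \<in> adjoint A ` (limiting_normal_cone Q w \<inter> cball 0 L)" for k
  proof -
    obtain y w where "(norm (y - v))\<^sup>2 \<le> \<kappa> * norm u * s k" "dist w (A v + b) \<le> 2 * norm (A (y - v))"
      "u - (2 * (4 * c + 1)) *\<^sub>R (y - v) \<in> adjoint A ` (limiting_normal_cone Q w \<inter> cball 0 (\<kappa> * norm u))"
      using proximal_normal_penalty_step[OF \<open>v \<in> S\<close> \<open>c \<ge> 0\<close> prox s_pos small[unfolded L_def]] .
    then show ?thesis unfolding L_def by blast
  qed
  then obtain Y W where Y: "\<And>k. (norm (Y k - v))\<^sup>2 \<le> L * s k"
    and W: "\<And>k. dist (W k) (A v + b) \<le> 2 * norm (A (Y k - v))"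
    and mem: "\<And>k. u - (2 * (4 * c + 1)) *\<^sub>R (Y k - v) \<in> adjoint A ` (limiting_normal_cone Q (W k) \<inter> cball 0 L)"
    by metis
  have "s \<longlonglongrightarrow> 0"
    unfolding s_def by (intro tendsto_mult_right_zero LIMSEQ_inverse_real_of_nat[unfolded inverse_eq_divide])
  have "(\<lambda>k. Y k - v) \<longlonglongrightarrow> 0"
  proof (rule Lim_null_comparison)
    show "\<forall>\<^sub>F k in sequentially. norm (Y k - v) \<le> sqrt (L * s k)"
      using Y by (intro always_eventually allI real_le_rsqrt)
    show "(\<lambda>k. sqrt (L * s k)) \<longlonglongrightarrow> 0"
      using tendsto_real_sqrt[OF tendsto_mult_right_zero[OF \<open>s \<longlonglongrightarrow> 0\<close>]] by simp
  qed
  then have AY: "(\<lambda>k. A (Y k - v)) \<longlonglongrightarrow> 0"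
    by (rule bounded_linear.tendsto_zero[OF linear_conv_bounded_linear[THEN iffD1, OF linear]])
  have "(\<lambda>k. W k - (A v + b)) \<longlonglongrightarrow> 0"
  proof (rule Lim_null_comparison)
    show "\<forall>\<^sub>F k in sequentially. norm (W k - (A v + b)) \<le> 2 * norm (A (Y k - v))"
      using W by (simp add: dist_norm)
    show "(\<lambda>k. 2 * norm (A (Y k - v))) \<longlonglongrightarrow> 0"
      using tendsto_mult_right_zero[OF tendsto_norm_zero[OF AY]] .
  qed
  then have W_lim: "W \<longlonglongrightarrow> A v + b" by (simp add: LIM_zero_iff)
  have u_lim: "(\<lambda>k. u - (2 * (4 * c + 1)) *\<^sub>R (Y k - v)) \<longlonglongrightarrow> u"
    using tendsto_diff[OF tendsto_const tendsto_scaleR[OF tendsto_const \<open>(\<lambda>k. Y k - v) \<longlonglongrightarrow> 0\<close>]] by simp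
  show ?thesis
    using adjoint_image_limiting_normal_limit[OF linear closed_Q W_lim tendsto_const u_lim mem]
    unfolding L_def .
qed

lemma regular_normal:
  assumes "u \<in> regular_normal_cone S v"
  shows "u \<in> adjoint A ` (limiting_normal_cone Q (A v + b) \<inter> cball 0 (\<kappa> * norm u))"
proof -
  obtain Y U c where Y: "\<And>k. Y k \<in> S" "Y \<longlonglongrightarrow> v" and "U \<longlonglongrightarrow> u" and c: "\<And>k. c k \<ge> 0"
    and prox: "\<And>k y. y \<in> S \<Longrightarrow> inner (U k) (y - Y k) \<le> c k * (norm (y - Y k))\<^sup>2"
    using regular_normal_proximal_approx[OF closed_S assms] by blast
  have "U k \<in> adjoint A ` (limiting_normal_cone Q (A (Y k) + b) \<inter> cball 0 (\<kappa> * norm (U k)))" for k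
    using proximal_normal[OF Y(1) c prox] .
  moreover have "(\<lambda>k. A (Y k) + b) \<longlonglongrightarrow> A v + b"
    using \<open>Y \<longlonglongrightarrow> v\<close> by (rule tendsto_affine)
  moreover have "(\<lambda>k. \<kappa> * norm (U k)) \<longlonglongrightarrow> \<kappa> * norm u"
    using \<open>U \<longlonglongrightarrow> u\<close> by (intro tendsto_intros)
  ultimately show ?thesis
    using adjoint_image_limiting_normal_limit[OF linear closed_Q _ _ \<open>U \<longlonglongrightarrow> u\<close>] by blast
qed

lemma limiting_normal:
  assumes "u \<in> limiting_normal_cone S v"
  shows "u \<in> adjoint A ` (limiting_normal_cone Q (A v + b) \<inter> cball 0 (\<kappa> * norm u))"
proof -
  obtain xs us where "xs \<longlonglongrightarrow> v" "us \<longlonglongrightarrow> u" "\<And>k. us k \<in> regular_normal_cone S (xs k)"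
    using assms unfolding limiting_normal_cone_def by (auto split: if_splits)
  then have "us k \<in> adjoint A ` (limiting_normal_cone Q (A (xs k) + b) \<inter> cball 0 (\<kappa> * norm (us k)))" for k
    using regular_normal by blast
  moreover have "(\<lambda>k. A (xs k) + b) \<longlonglongrightarrow> A v + b"
    using \<open>xs \<longlonglongrightarrow> v\<close> by (rule tendsto_affine)
  moreover have "(\<lambda>k. \<kappa> * norm (us k)) \<longlonglongrightarrow> \<kappa> * norm u"
    using \<open>us \<longlonglongrightarrow> u\<close> by (intro tendsto_intros)
  ultimately show ?thesis
    using adjoint_image_limiting_normal_limit[OF linear closed_Q _ _ \<open>us \<longlonglongrightarrow> u\<close>] by blast
qed

end

lemma limiting_normal_cone_error_bound_limit:
  assumes eb: "\<And>k. affine_error_bound A b S Q (\<kappa>s k)" and "\<kappa>s \<longlonglongrightarrow> \<kappa>"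
    and "u \<in> limiting_normal_cone S v"
  shows "u \<in> adjoint A ` (limiting_normal_cone Q (A v + b) \<inter> cball 0 (\<kappa> * norm u))"
  using adjoint_image_limiting_normal_limit[OF affine_error_bound.linear[OF eb]
      affine_error_bound.closed_Q[OF eb] tendsto_const tendsto_mult[OF \<open>\<kappa>s \<longlonglongrightarrow> \<kappa>\<close> tendsto_const]
      tendsto_const affine_error_bound.limiting_normal[OF eb \<open>u \<in> limiting_normal_cone S v\<close>]] .

section \<open>Second-order tangent sets\<close>

text \<open>Recording \<open>t / r\<close> as a coordinate turns the condition \<open>t / r \<rightarrow> 0\<close> into convergence of
  the tuple.\<close>
lemma asym_second_tangent_cone_eq_closure:
  "asym_second_tangent_cone S x d =
     {w. (0, 0, 0, w) \<in> closure {(t, r, q, w'). 0 < t \<and> 0 < r \<and> q = t / r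
                                   \<and> x + t *\<^sub>R d + (1/2 * t * r) *\<^sub>R w' \<in> S}}"
  (is "_ = {w. _ \<in> closure ?T}")
proof -
  have "w \<in> asym_second_tangent_cone S x d \<longleftrightarrow> (\<exists>X. (\<forall>k. X k \<in> ?T) \<and> X \<longlonglongrightarrow> (0, 0, 0, w))" for w
  proof
    assume "w \<in> asym_second_tangent_cone S x d"
    then obtain t r w' where "\<forall>k. t k > 0" "\<forall>k. r k > 0" "t \<longlonglongrightarrow> 0" "r \<longlonglongrightarrow> 0"
      "(\<lambda>k. t k / r k) \<longlonglongrightarrow> 0" "w' \<longlonglongrightarrow> w" "\<forall>k. x + t k *\<^sub>R d + (1/2 * t k * r k) *\<^sub>R w' k \<in> S"
      unfolding asym_second_tangent_cone_def by blast
    then show "\<exists>X. (\<forall>k. X k \<in> ?T) \<and> X \<longlonglongrightarrow> (0, 0, 0, w)"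
      by (intro exI[of _ "\<lambda>k. (t k, r k, t k / r k, w' k)"]) (auto intro!: tendsto_Pair)
  next
    assume "\<exists>X. (\<forall>k. X k \<in> ?T) \<and> X \<longlonglongrightarrow> (0, 0, 0, w)"
    then obtain X where X: "\<forall>k. X k \<in> ?T" "X \<longlonglongrightarrow> (0, 0, 0, w)" by blast
    have "(\<lambda>k. fst (X k)) \<longlonglongrightarrow> 0" "(\<lambda>k. fst (snd (X k))) \<longlonglongrightarrow> 0"
      "(\<lambda>k. fst (snd (snd (X k)))) \<longlonglongrightarrow> 0" "(\<lambda>k. snd (snd (snd (X k)))) \<longlonglongrightarrow> w"
      using tendsto_fst[OF X(2)] tendsto_fst[OF tendsto_snd[OF X(2)]]
        tendsto_fst[OF tendsto_snd[OF tendsto_snd[OF X(2)]]]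
        tendsto_snd[OF tendsto_snd[OF tendsto_snd[OF X(2)]]] by simp_all
    with X(1) show "w \<in> asym_second_tangent_cone S x d"
      unfolding asym_second_tangent_cone_def
      by (intro CollectI exI[of _ "\<lambda>k. fst (X k)"] exI[of _ "\<lambda>k. fst (snd (X k))"]
            exI[of _ "\<lambda>k. snd (snd (snd (X k)))"]) (auto simp: case_prod_beta)
  qed
  then show ?thesis by (auto simp: closure_sequential)
qed

lemma second_tangent_set_eq_closure:
  "second_tangent_set S x d =
     {w. (0, w) \<in> closure {(t, w'). 0 < t \<and> x + t *\<^sub>R d + (1/2 * t\<^sup>2) *\<^sub>R w' \<in> S}}"
  (is "_ = {w. _ \<in> closure ?T}")
proof -
  have "w \<in> second_tangent_set S x d \<longleftrightarrow> (\<exists>X. (\<forall>k. X k \<in> ?T) \<and> X \<longlonglongrightarrow> (0, w))" for w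
  proof
    assume "w \<in> second_tangent_set S x d"
    then obtain t w' where "\<forall>k. t k > 0" "t \<longlonglongrightarrow> 0" "w' \<longlonglongrightarrow> w"
      "\<forall>k. x + t k *\<^sub>R d + (1/2 * (t k)\<^sup>2) *\<^sub>R w' k \<in> S"
      unfolding second_tangent_set_def by blast
    then show "\<exists>X. (\<forall>k. X k \<in> ?T) \<and> X \<longlonglongrightarrow> (0, w)"
      by (intro exI[of _ "\<lambda>k. (t k, w' k)"]) (auto intro!: tendsto_Pair)
  next
    assume "\<exists>X. (\<forall>k. X k \<in> ?T) \<and> X \<longlonglongrightarrow> (0, w)"
    then obtain X where X: "\<forall>k. X k \<in> ?T" "X \<longlonglongrightarrow> (0, w)" by blast
    with tendsto_fst[OF X(2)] tendsto_snd[OF X(2)] show "w \<in> second_tangent_set S x d"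
      unfolding second_tangent_set_def
      by (intro CollectI exI[of _ "\<lambda>k. fst (X k)"] exI[of _ "\<lambda>k. snd (X k)"]) (auto simp: case_prod_beta)
  qed
  then show ?thesis by (auto simp: closure_sequential)
qed

lemma closed_asym_second_tangent_cone: "closed (asym_second_tangent_cone S x d)"
  unfolding asym_second_tangent_cone_eq_closure
  by (rule continuous_closed_vimage[where f = "\<lambda>w. (0, 0, 0, w)", simplified vimage_def])
     (auto intro!: continuous_intros)

lemma closed_second_tangent_set: "closed (second_tangent_set S x d)"
  unfolding second_tangent_set_eq_closure
  by (rule continuous_closed_vimage[where f = "\<lambda>w. (0, w)", simplified vimage_def])
     (auto intro!: continuous_intros)

section \<open>Directional MSCQ and the second-order expansion of g\<close>

lemma eventually_scaled_in_dir_nbhd: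
  fixes u :: "nat \<Rightarrow> 'a::real_normed_vector"
  assumes t: "\<And>k. t k > 0" "t \<longlonglongrightarrow> 0" and u: "u \<longlonglongrightarrow> d" and "\<rho> > 0" and "\<delta> > 0"
  shows "eventually (\<lambda>k. t k *\<^sub>R u k \<in> dir_nbhd \<rho> \<delta> d) sequentially"
proof -
  have "(\<lambda>k. t k *\<^sub>R u k) \<longlonglongrightarrow> 0"
    using tendsto_scaleR[OF t(2) u] by simp
  from tendstoD[OF this \<open>\<delta> > 0\<close>]
  have small: "eventually (\<lambda>k. norm (t k *\<^sub>R u k) < \<delta>) sequentially" by simp
  have "eventually (\<lambda>k. norm (norm d *\<^sub>R u k - norm (u k) *\<^sub>R d) \<le> \<rho> * norm (u k) * norm d) sequentially"
  proof (cases "d = 0")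
    case False
    have "(\<lambda>k. norm (norm d *\<^sub>R u k - norm (u k) *\<^sub>R d) - \<rho> * norm (u k) * norm d)
        \<longlonglongrightarrow> norm (norm d *\<^sub>R d - norm d *\<^sub>R d) - \<rho> * norm d * norm d"
      by (intro tendsto_intros u)
    moreover have "norm (norm d *\<^sub>R d - norm d *\<^sub>R d) - \<rho> * norm d * norm d < 0"
      using False \<open>\<rho> > 0\<close> by simp
    ultimately show ?thesis
      by (rule order_tendstoD(2)[THEN eventually_mono]) simp
  qed simp
  with small show ?thesis
  proof eventually_elim
    case (elim k)
    have "norm d *\<^sub>R (t k *\<^sub>R u k) - norm (t k *\<^sub>R u k) *\<^sub>R d
        = t k *\<^sub>R (norm d *\<^sub>R u k - norm (u k) *\<^sub>R d)"
      using t(1)[of k] by (simp add: algebra_simps)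
    then have "norm (norm d *\<^sub>R (t k *\<^sub>R u k) - norm (t k *\<^sub>R u k) *\<^sub>R d)
        = t k * norm (norm d *\<^sub>R u k - norm (u k) *\<^sub>R d)"
      using t(1)[of k] by simp
    also have "\<dots> \<le> \<rho> * norm (t k *\<^sub>R u k) * norm d"
      using mult_left_mono[OF elim(2), of "t k"] t(1)[of k] by (simp add: mult_ac)
    finally show ?case using elim(1) by (simp add: dir_nbhd_def)
  qed
qed

lemma convergent_subsequence_near:
  fixes ys :: "nat \<Rightarrow> 'a::{heine_borel, real_normed_vector}"
  assumes near: "eventually (\<lambda>k. norm (ys k - y) \<le> R k) sequentially" and R: "R \<longlonglongrightarrow> R0"
  obtains \<phi> y' where "strict_mono \<phi>" "(ys \<circ> \<phi>) \<longlonglongrightarrow> y'" "norm (y' - y) \<le> R0"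
proof -
  obtain N where N: "\<And>k. k \<ge> N \<Longrightarrow> norm (ys k - y) \<le> R k"
    using near unfolding eventually_sequentially by blast
  obtain B where B: "\<And>k. norm (R k) \<le> B"
    using BseqE[OF convergent_imp_Bseq[OF convergentI[OF R]]] by blast
  have "norm (ys (k + N)) \<le> norm y + B" for k
    using norm_triangle_ineq[of y "ys (k + N) - y"] N[of "k + N"] B[of "k + N"] by simp
  then have "bounded (range (\<lambda>k. ys (k + N)))"
    unfolding bounded_iff by blast
  then obtain \<phi> y' where \<phi>: "strict_mono \<phi>" "((\<lambda>k. ys (k + N)) \<circ> \<phi>) \<longlonglongrightarrow> y'"
    using bounded_imp_convergent_subsequence by blast
  define \<psi> where "\<psi> k = \<phi> k + N" for k
  have "strict_mono \<psi>" using \<phi>(1) by (simp add: strict_mono_def \<psi>_def)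
  moreover have "(ys \<circ> \<psi>) \<longlonglongrightarrow> y'" using \<phi>(2) by (simp add: o_def \<psi>_def)
  moreover have "norm (y' - y) \<le> R0"
  proof (rule LIMSEQ_le[OF tendsto_norm[OF tendsto_diff[OF \<open>(ys \<circ> \<psi>) \<longlonglongrightarrow> y'\<close> tendsto_const]]])
    show "(R \<circ> \<psi>) \<longlonglongrightarrow> R0" using LIMSEQ_subseq_LIMSEQ[OF R \<open>strict_mono \<psi>\<close>] .
    show "\<exists>M. \<forall>k\<ge>M. norm ((ys \<circ> \<psi>) k - y) \<le> (R \<circ> \<psi>) k"
      using N by (auto simp: \<psi>_def)
  qed
  ultimately show ?thesis using that by blast
qed

lemma mscq_constants_tendsto_modulus:
  assumes "mscq_dir g K xbar d"
  obtains \<kappa>s where "\<And>k. \<kappa>s k \<in> mscq_constants g K xbar d" "\<kappa>s \<longlonglongrightarrow> mscq_modulus g K xbar d"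
proof -
  have "bdd_below (mscq_constants g K xbar d)"
    by (rule bdd_belowI[of _ 0]) (simp add: mscq_constants_def)
  then have "mscq_modulus g K xbar d \<in> closure (mscq_constants g K xbar d)"
    using closure_contains_Inf assms by (simp add: mscq_dir_def mscq_modulus_def)
  then show ?thesis
    using that by (auto simp: closure_sequential)
qed

context
  fixes g :: "'n::euclidean_space \<Rightarrow> 'm::euclidean_space"
    and Dg :: "'n \<Rightarrow> 'n \<Rightarrow> 'm" and D2g :: "'n \<Rightarrow> 'n \<Rightarrow> 'n \<Rightarrow> 'm"
  assumes D1: "\<And>x. (g has_derivative Dg x) (at x)"
    and D2: "\<And>x h. ((\<lambda>y. Dg y h) has_derivative (\<lambda>u. D2g x u h)) (at x)"
begin

lemma linear_Dg: "linear (Dg x)"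
  using has_derivative_linear[OF D1] .

lemma bounded_bilinear_D2g: "bounded_bilinear (D2g x)"
proof -
  have "linear (\<lambda>u. D2g x u h)" for h
    using has_derivative_linear[OF D2] .
  moreover have "linear (\<lambda>h. D2g x u h)" for u
  proof
    fix h1 h2
    have "((\<lambda>y. Dg y h1 + Dg y h2) has_derivative (\<lambda>u. D2g x u h1 + D2g x u h2)) (at x)"
      by (intro has_derivative_add D2)
    then have "((\<lambda>y. Dg y (h1 + h2)) has_derivative (\<lambda>u. D2g x u h1 + D2g x u h2)) (at x)"
      by (simp add: linear_add[OF linear_Dg])
    from has_derivative_unique[OF D2 this]
    show "D2g x u (h1 + h2) = D2g x u h1 + D2g x u h2" by meson
  next
    fix r :: real and h
    have "((\<lambda>y. r *\<^sub>R Dg y h) has_derivative (\<lambda>u. r *\<^sub>R D2g x u h)) (at x)"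
      by (intro has_derivative_scaleR_right D2)
    then have "((\<lambda>y. Dg y (r *\<^sub>R h)) has_derivative (\<lambda>u. r *\<^sub>R D2g x u h)) (at x)"
      by (simp add: linear_scale[OF linear_Dg])
    from has_derivative_unique[OF D2 this]
    show "D2g x u (r *\<^sub>R h) = r *\<^sub>R D2g x u h" by meson
  qed
  ultimately show ?thesis
    using bilinear_conv_bounded_bilinear unfolding bilinear_def by blast
qed

text \<open>Uniformity in \<open>e\<close> comes from expanding \<open>e\<close> in the finite basis.\<close>
lemma Dg_remainder_uniform:
  assumes "\<epsilon> > 0"
  shows "\<exists>\<delta>>0. \<forall>k e. norm k < \<delta> \<longrightarrow> norm (Dg (x + k) e - Dg x e - D2g x k e) \<le> \<epsilon> * norm k * norm e"
proof -
  define \<epsilon>' where "\<epsilon>' = \<epsilon> / real DIM('n)"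
  have "\<epsilon>' > 0" using assms by (simp add: \<epsilon>'_def)
  have "\<forall>i\<in>Basis. eventually (\<lambda>k. norm (Dg (x + k) i - Dg x i - D2g x k i) \<le> \<epsilon>' * norm k) (nhds 0)"
  proof
    fix i :: 'n
    have "\<forall>e>0. \<exists>d>0. \<forall>y. norm (y - x) < d \<longrightarrow> norm (Dg y i - Dg x i - D2g x (y - x) i) \<le> e * norm (y - x)"
      using conjunct2[OF D2[where x = x and h = i, unfolded has_derivative_at_alt]] .
    from this[rule_format, OF \<open>\<epsilon>' > 0\<close>] obtain d where "d > 0"
      and d: "\<And>y. norm (y - x) < d \<Longrightarrow> norm (Dg y i - Dg x i - D2g x (y - x) i) \<le> \<epsilon>' * norm (y - x)"
      by blast
    show "eventually (\<lambda>k. norm (Dg (x + k) i - Dg x i - D2g x k i) \<le> \<epsilon>' * norm k) (nhds 0)"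
      unfolding eventually_nhds_metric
    proof (intro exI[of _ d] conjI allI impI)
      fix k :: 'n assume "dist k 0 < d"
      then show "norm (Dg (x + k) i - Dg x i - D2g x k i) \<le> \<epsilon>' * norm k"
        using d[of "x + k"] by simp
    qed (fact \<open>d > 0\<close>)
  qed
  then have "eventually (\<lambda>k. \<forall>i\<in>Basis. norm (Dg (x + k) i - Dg x i - D2g x k i) \<le> \<epsilon>' * norm k) (nhds 0)"
    by (intro eventually_ball_finite) auto
  then obtain \<delta> where "\<delta> > 0" and \<delta>: "\<And>k i. norm k < \<delta> \<Longrightarrow> i \<in> Basis
      \<Longrightarrow> norm (Dg (x + k) i - Dg x i - D2g x k i) \<le> \<epsilon>' * norm k"
    unfolding eventually_nhds_metric dist_norm by auto
  show ?thesis
  proof (intro exI[of _ \<delta>] conjI allI impI)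
    fix k e :: 'n assume "norm k < \<delta>"
    define f where "f e = Dg (x + k) e - Dg x e - D2g x k e" for e
    have "linear f"
      unfolding f_def
      using linear_Dg bounded_linear.linear[OF bounded_bilinear.bounded_linear_right[OF bounded_bilinear_D2g]]
      by (intro linear_compose_sub)
    have "f e = f (\<Sum>i\<in>Basis. (e \<bullet> i) *\<^sub>R i)" by (simp add: euclidean_representation)
    also have "\<dots> = (\<Sum>i\<in>Basis. (e \<bullet> i) *\<^sub>R f i)"
      by (simp add: linear_sum[OF \<open>linear f\<close>] linear_scale[OF \<open>linear f\<close>])
    finally have "norm (f e) \<le> (\<Sum>i\<in>Basis. norm ((e \<bullet> i) *\<^sub>R f i))"
      by (metis norm_sum)
    also have "\<dots> \<le> (\<Sum>i\<in>(Basis::'n set). norm e * (\<epsilon>' * norm k))"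
      using \<delta>[OF \<open>norm k < \<delta>\<close>] Basis_le_norm
      by (intro sum_mono) (auto simp: f_def intro!: mult_mono)
    also have "\<dots> = \<epsilon> * norm k * norm e" by (simp add: \<epsilon>'_def)
    finally show "norm (Dg (x + k) e - Dg x e - D2g x k e) \<le> \<epsilon> * norm k * norm e" by (simp add: f_def)
  qed (fact \<open>\<delta> > 0\<close>)
qed

lemma second_order_taylor:
  assumes "\<epsilon> > 0"
  shows "\<exists>\<delta>>0. \<forall>h. norm h < \<delta> \<longrightarrow> norm (g (x + h) - g x - Dg x h - (1/2) *\<^sub>R D2g x h h) \<le> \<epsilon> * (norm h)\<^sup>2"
proof -
  obtain \<delta> where "\<delta> > 0"
    and \<delta>: "\<And>k e. norm k < \<delta> \<Longrightarrow> norm (Dg (x + k) e - Dg x e - D2g x k e) \<le> \<epsilon> * norm k * norm e"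
    using Dg_remainder_uniform[OF assms] by blast
  show ?thesis
  proof (intro exI[of _ \<delta>] conjI allI impI)
    fix h :: 'n assume h: "norm h < \<delta>"
    define \<psi> where "\<psi> s = g (x + s *\<^sub>R h) - s *\<^sub>R Dg x h - (s\<^sup>2 / 2) *\<^sub>R D2g x h h" for s :: real
    define \<psi>' where "\<psi>' s = (\<lambda>r::real. r *\<^sub>R (Dg (x + s *\<^sub>R h) h - Dg x h - s *\<^sub>R D2g x h h))" for s
    have "(\<psi> has_derivative \<psi>' s) (at s within T)" for s T
    proof -
      have "((\<lambda>s. g (x + s *\<^sub>R h)) has_derivative (\<lambda>r. Dg (x + s *\<^sub>R h) (r *\<^sub>R h))) (at s within T)"
        by (rule has_derivative_compose[OF _ D1]) (auto intro!: derivative_eq_intros)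
      then have "(\<psi> has_derivative (\<lambda>r. Dg (x + s *\<^sub>R h) (r *\<^sub>R h) - r *\<^sub>R Dg x h - (2 * s * r / 2) *\<^sub>R D2g x h h))
          (at s within T)"
        unfolding \<psi>_def by (auto intro!: derivative_eq_intros simp: power2_eq_square algebra_simps)
      then show ?thesis
        by (simp add: \<psi>'_def linear_scale[OF linear_Dg] algebra_simps)
    qed
    moreover from this have "continuous_on {0..1} \<psi>"
      by (intro has_derivative_continuous_on) blast
    ultimately obtain s where s: "s \<in> {0<..<1}" "norm (\<psi> 1 - \<psi> 0) \<le> norm (\<psi>' s (1 - 0))"
      using mvt_general[of 0 1 \<psi> \<psi>'] by auto
    have "norm (\<psi>' s (1 - 0)) \<le> \<epsilon> * norm (s *\<^sub>R h) * norm h"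
      using \<delta>[of "s *\<^sub>R h" h] s(1) h mult_left_le_one_le[of "norm h" s]
      by (simp add: \<psi>'_def linear_scale[OF bounded_linear.linear[OF bounded_bilinear.bounded_linear_left[OF bounded_bilinear_D2g]]])
    also have "\<dots> \<le> \<epsilon> * (norm h)\<^sup>2"
      using s(1) \<open>\<epsilon> > 0\<close> by (simp add: power2_eq_square mult_le_cancel_right2 mult_left_le_one_le mult.assoc)
    finally have "norm (\<psi>' s (1 - 0)) \<le> \<epsilon> * (norm h)\<^sup>2" .
    moreover have "\<psi> 1 - \<psi> 0 = g (x + h) - g x - Dg x h - (1/2) *\<^sub>R D2g x h h"
      by (simp add: \<psi>_def)
    ultimately show "norm (g (x + h) - g x - Dg x h - (1/2) *\<^sub>R D2g x h h) \<le> \<epsilon> * (norm h)\<^sup>2"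
      using s(2) by simp
  qed (fact \<open>\<delta> > 0\<close>)
qed

lemma taylor_remainder_sequence:
  assumes \<sigma>: "\<And>k. \<sigma> k > 0" and "h \<longlonglongrightarrow> 0"
    and B: "\<And>k. (norm (h k))\<^sup>2 / \<sigma> k \<le> B k" and "B \<longlonglongrightarrow> B0"
  shows "(\<lambda>k. (1 / \<sigma> k) *\<^sub>R (g (x + h k) - g x - Dg x (h k) - (1/2) *\<^sub>R D2g x (h k) (h k))) \<longlonglongrightarrow> 0"
proof (rule tendstoI)
  fix e :: real assume "e > 0"
  obtain M where M: "\<And>k. B k \<le> M"
    using BseqE[OF convergent_imp_Bseq[OF convergentI[OF \<open>B \<longlonglongrightarrow> B0\<close>]]] by (metis abs_le_D1 real_norm_def)
  define \<epsilon> where "\<epsilon> = e / (2 * (\<bar>M\<bar> + 1))"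
  have "\<epsilon> > 0" using \<open>e > 0\<close> by (simp add: \<epsilon>_def add_pos_nonneg)
  obtain \<delta> where "\<delta> > 0"
    and \<delta>: "\<And>v. norm v < \<delta> \<Longrightarrow> norm (g (x + v) - g x - Dg x v - (1/2) *\<^sub>R D2g x v v) \<le> \<epsilon> * (norm v)\<^sup>2"
    using second_order_taylor[OF \<open>\<epsilon> > 0\<close>] by blast
  from tendstoD[OF \<open>h \<longlonglongrightarrow> 0\<close> \<open>\<delta> > 0\<close>]
  show "eventually (\<lambda>k. dist ((1 / \<sigma> k) *\<^sub>R (g (x + h k) - g x - Dg x (h k) - (1/2) *\<^sub>R D2g x (h k) (h k))) 0 < e)
      sequentially"
  proof eventually_elim
    case (elim k)
    then have "norm (g (x + h k) - g x - Dg x (h k) - (1/2) *\<^sub>R D2g x (h k) (h k)) / \<sigma> k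
        \<le> \<epsilon> * ((norm (h k))\<^sup>2 / \<sigma> k)"
      using \<delta>[of "h k"] \<sigma>[of k] by (simp add: divide_right_mono)
    also have "\<dots> \<le> \<epsilon> * (\<bar>M\<bar> + 1)"
      using B[of k] M[of k] \<open>\<epsilon> > 0\<close> by (intro mult_left_mono) auto
    also have "\<dots> < e"
      using \<open>e > 0\<close> by (simp add: \<epsilon>_def field_simps add_pos_nonneg)
    finally show ?case using \<sigma>[of k] by simp
  qed
qed

text \<open>Both second-order tangent sets are covered: \<open>a = 0\<close> for the asymptotic cone
  (\<open>\<sigma> = t r / 2\<close>) and \<open>a = 2\<close> for the second-order tangent set (\<open>\<sigma> = t\<^sup>2 / 2\<close>).\<close>
lemma second_order_expansion:
  assumes \<sigma>: "\<And>k. \<sigma> k > 0" and t: "t \<longlonglongrightarrow> 0" and "\<sigma> \<longlonglongrightarrow> 0"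
    and ratio: "(\<lambda>k. (t k)\<^sup>2 / \<sigma> k) \<longlonglongrightarrow> a" and y: "y \<longlonglongrightarrow> y0"
  shows "(\<lambda>k. (1 / \<sigma> k) *\<^sub>R (g (x + t k *\<^sub>R d + \<sigma> k *\<^sub>R y k) - g x - t k *\<^sub>R Dg x d))
           \<longlonglongrightarrow> Dg x y0 + (a / 2) *\<^sub>R D2g x d d"
proof -
  interpret D2: bounded_bilinear "D2g x" by (rule bounded_bilinear_D2g)
  define h where "h k = t k *\<^sub>R d + \<sigma> k *\<^sub>R y k" for k
  define R where "R v = g (x + v) - g x - Dg x v - (1/2) *\<^sub>R D2g x v v" for v
  have expand: "(1 / \<sigma> k) *\<^sub>R (g (x + t k *\<^sub>R d + \<sigma> k *\<^sub>R y k) - g x - t k *\<^sub>R Dg x d)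
      = (1 / \<sigma> k) *\<^sub>R R (h k) + Dg x (y k) + ((t k)\<^sup>2 / \<sigma> k / 2) *\<^sub>R D2g x d d
        + (t k / 2) *\<^sub>R (D2g x d (y k) + D2g x (y k) d) + (\<sigma> k / 2) *\<^sub>R D2g x (y k) (y k)" for k
    using \<sigma>[of k]
    by (simp add: R_def h_def add.assoc linear_add[OF linear_Dg] linear_scale[OF linear_Dg]
        D2.add_left D2.add_right D2.scaleR_left D2.scaleR_right scaleR_add_right
        power2_eq_square field_simps)
  define B where "B k = 2 * ((t k)\<^sup>2 / \<sigma> k) * (norm d)\<^sup>2 + 2 * \<sigma> k * (norm (y k))\<^sup>2" for k
  have h_bound: "(norm (h k))\<^sup>2 / \<sigma> k \<le> B k" for k
  proof -
    have "norm (h k) \<le> \<bar>t k\<bar> * norm d + \<sigma> k * norm (y k)"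
      using norm_triangle_ineq[of "t k *\<^sub>R d" "\<sigma> k *\<^sub>R y k"] \<sigma>[of k] by (simp add: h_def)
    then have "(norm (h k))\<^sup>2 \<le> (\<bar>t k\<bar> * norm d + \<sigma> k * norm (y k))\<^sup>2"
      by (rule power_mono) simp
    also have "\<dots> \<le> 2 * (t k)\<^sup>2 * (norm d)\<^sup>2 + 2 * (\<sigma> k)\<^sup>2 * (norm (y k))\<^sup>2"
      using zero_le_power2[of "\<bar>t k\<bar> * norm d - \<sigma> k * norm (y k)"]
      by (simp add: power2_eq_square algebra_simps)
    finally show ?thesis
      using \<sigma>[of k] by (simp add: B_def divide_le_eq power2_eq_square algebra_simps)
  qed
  have B_lim: "B \<longlonglongrightarrow> 2 * a * (norm d)\<^sup>2 + 2 * 0 * (norm y0)\<^sup>2"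
    unfolding B_def by (intro tendsto_intros ratio \<open>\<sigma> \<longlonglongrightarrow> 0\<close> y)
  have h_lim: "h \<longlonglongrightarrow> 0"
    unfolding h_def using tendsto_add[OF tendsto_scaleR[OF t tendsto_const] tendsto_scaleR[OF \<open>\<sigma> \<longlonglongrightarrow> 0\<close> y]]
    by simp
  have remainder: "(\<lambda>k. (1 / \<sigma> k) *\<^sub>R R (h k)) \<longlonglongrightarrow> 0"
    unfolding R_def by (rule taylor_remainder_sequence[OF \<sigma> h_lim h_bound B_lim])
  have linear_part: "(\<lambda>k. Dg x (y k)) \<longlonglongrightarrow> Dg x y0"
    using y by (rule bounded_linear.tendsto[OF has_derivative_bounded_linear[OF D1]])
  have curvature_part: "(\<lambda>k. ((t k)\<^sup>2 / \<sigma> k / 2) *\<^sub>R D2g x d d) \<longlonglongrightarrow> (a / 2) *\<^sub>R D2g x d d"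
    by (intro tendsto_intros ratio) simp
  have cross_part: "(\<lambda>k. (t k / 2) *\<^sub>R (D2g x d (y k) + D2g x (y k) d)) \<longlonglongrightarrow> 0"
    using tendsto_scaleR[OF tendsto_divide[OF t tendsto_const] tendsto_add[OF D2.tendsto[OF tendsto_const y]
        D2.tendsto[OF y tendsto_const]], of 2] by simp
  have tail_part: "(\<lambda>k. (\<sigma> k / 2) *\<^sub>R D2g x (y k) (y k)) \<longlonglongrightarrow> 0"
    using tendsto_scaleR[OF tendsto_divide[OF \<open>\<sigma> \<longlonglongrightarrow> 0\<close> tendsto_const] D2.tendsto[OF y y], of 2] by simp
  show ?thesis
    unfolding expand
    using tendsto_add[OF tendsto_add[OF tendsto_add[OF tendsto_add[OF remainder linear_part]
          curvature_part] cross_part] tail_part]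
    by simp
qed

lemma directional_error_bound_projection:
  fixes K :: "'m set"
  assumes "closed K" and "xbar \<in> g -` K"
    and EB: "\<And>w. w \<in> dir_nbhd \<rho> \<delta> d \<Longrightarrow> infdist (xbar + w) (g -` K) \<le> \<kappa> * infdist (g (xbar + w)) K"
    and "\<rho> > 0" and "\<delta> > 0" and "\<kappa> \<ge> 0"
    and t: "\<And>k. t k > 0" "t \<longlonglongrightarrow> 0" and \<sigma>: "\<And>k. \<sigma> k > 0" "(\<lambda>k. \<sigma> k / t k) \<longlonglongrightarrow> 0"
    and qK: "\<And>k. g xbar + t k *\<^sub>R Dg xbar d + \<sigma> k *\<^sub>R q k \<in> K"
  obtains ys where "\<And>k. xbar + t k *\<^sub>R d + \<sigma> k *\<^sub>R ys k \<in> g -` K"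
    and "eventually (\<lambda>k. norm (ys k - y) \<le> \<kappa> * norm ((1 / \<sigma> k) *\<^sub>R
            (g (xbar + t k *\<^sub>R d + \<sigma> k *\<^sub>R y) - g xbar - t k *\<^sub>R Dg xbar d) - q k)) sequentially"
proof -
  define C where "C = g -` K"
  have "closed C"
    unfolding C_def using \<open>closed K\<close> has_derivative_continuous[OF D1]
    by (rule continuous_closed_vimage)
  define x where "x k = xbar + t k *\<^sub>R d + \<sigma> k *\<^sub>R y" for k
  define e where "e k = (1 / \<sigma> k) *\<^sub>R (g (x k) - g xbar - t k *\<^sub>R Dg xbar d)" for k
  have "\<exists>c\<in>C. infdist (x k) C = dist (x k) c" for k
    using infdist_attains_inf[OF \<open>closed C\<close>] \<open>xbar \<in> g -` K\<close> unfolding C_def by blast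
  then obtain c where c: "\<And>k. c k \<in> C" "\<And>k. infdist (x k) C = dist (x k) (c k)" by metis
  define ys where "ys k = y + (1 / \<sigma> k) *\<^sub>R (c k - x k)" for k
  have "xbar + t k *\<^sub>R d + \<sigma> k *\<^sub>R ys k = c k" for k
    using \<sigma>(1)[of k] by (simp add: ys_def x_def algebra_simps)
  then have "xbar + t k *\<^sub>R d + \<sigma> k *\<^sub>R ys k \<in> g -` K" for k
    using c(1) by (simp add: C_def)
  moreover have "eventually (\<lambda>k. t k *\<^sub>R (d + (\<sigma> k / t k) *\<^sub>R y) \<in> dir_nbhd \<rho> \<delta> d) sequentially"
    using tendsto_add[OF tendsto_const tendsto_scaleR[OF \<sigma>(2) tendsto_const], of d y]
    by (intro eventually_scaled_in_dir_nbhd[OF t _ \<open>\<rho> > 0\<close> \<open>\<delta> > 0\<close>]) simp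
  then have "eventually (\<lambda>k. norm (ys k - y) \<le> \<kappa> * norm (e k - q k)) sequentially"
  proof eventually_elim
    case (elim k)
    have x_eq: "x k = xbar + t k *\<^sub>R (d + (\<sigma> k / t k) *\<^sub>R y)"
      using t(1)[of k] by (simp add: x_def scaleR_add_right)
    have "g (x k) - (g xbar + t k *\<^sub>R Dg xbar d + \<sigma> k *\<^sub>R q k) = \<sigma> k *\<^sub>R (e k - q k)"
      using \<sigma>(1)[of k] by (simp add: e_def algebra_simps)
    then have "infdist (g (x k)) K \<le> \<sigma> k * norm (e k - q k)"
      using infdist_le[OF qK[of k], of "g (x k)"] \<sigma>(1)[of k] by (simp add: dist_norm)
    then have "infdist (x k) C \<le> \<kappa> * (\<sigma> k * norm (e k - q k))"
      using EB[OF elim] \<open>\<kappa> \<ge> 0\<close> unfolding x_eq[symmetric] C_def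
      by (meson mult_left_mono order_trans)
    moreover have "norm (ys k - y) = infdist (x k) C / \<sigma> k"
      using c(2)[of k] \<sigma>(1)[of k] by (simp add: ys_def dist_norm norm_minus_commute)
    ultimately show ?case
      using \<sigma>(1)[of k] by (simp add: divide_le_eq mult_ac)
  qed
  ultimately show ?thesis
    using that unfolding e_def x_def by blast
qed

lemma directional_error_bound_sequence:
  fixes K :: "'m set"
  assumes "closed K" and "xbar \<in> g -` K"
    and EB: "\<And>w. w \<in> dir_nbhd \<rho> \<delta> d \<Longrightarrow> infdist (xbar + w) (g -` K) \<le> \<kappa> * infdist (g (xbar + w)) K"
    and "\<rho> > 0" and "\<delta> > 0" and "\<kappa> \<ge> 0"
    and t: "\<And>k. t k > 0" "t \<longlonglongrightarrow> 0" and \<sigma>: "\<And>k. \<sigma> k > 0" "(\<lambda>k. \<sigma> k / t k) \<longlonglongrightarrow> 0"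
    and ratio: "(\<lambda>k. (t k)\<^sup>2 / \<sigma> k) \<longlonglongrightarrow> a"
    and q: "q \<longlonglongrightarrow> q0" and qK: "\<And>k. g xbar + t k *\<^sub>R Dg xbar d + \<sigma> k *\<^sub>R q k \<in> K"
  obtains \<phi> ys y' where "strict_mono \<phi>" "(ys \<circ> \<phi>) \<longlonglongrightarrow> y'"
    "norm (y' - y) \<le> \<kappa> * norm (Dg xbar y + (a / 2) *\<^sub>R D2g xbar d d - q0)"
    "\<And>k. xbar + t k *\<^sub>R d + \<sigma> k *\<^sub>R ys k \<in> g -` K"
proof -
  obtain ys where mem: "\<And>k. xbar + t k *\<^sub>R d + \<sigma> k *\<^sub>R ys k \<in> g -` K"
    and near: "eventually (\<lambda>k. norm (ys k - y) \<le> \<kappa> * norm ((1 / \<sigma> k) *\<^sub>R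
            (g (xbar + t k *\<^sub>R d + \<sigma> k *\<^sub>R y) - g xbar - t k *\<^sub>R Dg xbar d) - q k)) sequentially"
    using directional_error_bound_projection[OF assms(1-6) t \<sigma> qK] by blast
  have "\<sigma> \<longlonglongrightarrow> 0"
  proof -
    have "(\<lambda>k. \<sigma> k / t k * t k) \<longlonglongrightarrow> 0 * 0" by (intro tendsto_mult \<sigma>(2) t(2))
    then show ?thesis using t(1) by (simp add: less_imp_neq[symmetric])
  qed
  with second_order_expansion[OF \<sigma>(1) t(2) _ ratio tendsto_const, of xbar d y]
  have "(\<lambda>k. \<kappa> * norm ((1 / \<sigma> k) *\<^sub>R (g (xbar + t k *\<^sub>R d + \<sigma> k *\<^sub>R y) - g xbar - t k *\<^sub>R Dg xbar d) - q k))
      \<longlonglongrightarrow> \<kappa> * norm (Dg xbar y + (a / 2) *\<^sub>R D2g xbar d d - q0)"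
    by (intro tendsto_intros q)
  from convergent_subsequence_near[OF near this] show ?thesis
    using that mem by blast
qed

lemma Dg_mem_asym_second_tangent_cone:
  assumes "v \<in> asym_second_tangent_cone (g -` K) xbar d"
  shows "Dg xbar v \<in> asym_second_tangent_cone K (g xbar) (Dg xbar d)"
proof -
  obtain t r v' where t: "\<forall>k. t k > 0" "t \<longlonglongrightarrow> 0" and r: "\<forall>k. r k > 0" "r \<longlonglongrightarrow> 0"
    and "(\<lambda>k. t k / r k) \<longlonglongrightarrow> 0" "v' \<longlonglongrightarrow> v"
    and mem: "\<forall>k. xbar + t k *\<^sub>R d + (1/2 * t k * r k) *\<^sub>R v' k \<in> g -` K"
    using assms unfolding asym_second_tangent_cone_def by blast
  define \<sigma> where "\<sigma> k = 1/2 * t k * r k" for k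
  have \<sigma>: "\<sigma> k > 0" for k using t(1) r(1) by (simp add: \<sigma>_def)
  define q where "q k = (1 / \<sigma> k) *\<^sub>R (g (xbar + t k *\<^sub>R d + \<sigma> k *\<^sub>R v' k) - g xbar - t k *\<^sub>R Dg xbar d)" for k
  have "(\<lambda>k. (t k)\<^sup>2 / \<sigma> k) \<longlonglongrightarrow> 2 * 0"
  proof -
    have "(t k)\<^sup>2 / \<sigma> k = 2 * (t k / r k)" for k
      using t(1)[rule_format, of k] by (simp add: \<sigma>_def power2_eq_square)
    then show ?thesis
      using tendsto_mult_left[OF \<open>(\<lambda>k. t k / r k) \<longlonglongrightarrow> 0\<close>, of 2] by simp
  qed
  moreover have "\<sigma> \<longlonglongrightarrow> 0"
    unfolding \<sigma>_def using tendsto_mult[OF tendsto_mult_left[OF t(2), of "1/2"] r(2)] by simp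
  ultimately have "q \<longlonglongrightarrow> Dg xbar v"
    unfolding q_def
    using second_order_expansion[OF \<sigma> t(2) _ _ \<open>v' \<longlonglongrightarrow> v\<close>, where x = xbar and d = d and a = 0] by simp
  moreover have "g xbar + t k *\<^sub>R Dg xbar d + (1/2 * t k * r k) *\<^sub>R q k \<in> K" for k
  proof -
    have "g xbar + t k *\<^sub>R Dg xbar d + \<sigma> k *\<^sub>R q k = g (xbar + t k *\<^sub>R d + \<sigma> k *\<^sub>R v' k)"
      using \<sigma>[of k] by (simp add: q_def)
    then show ?thesis using mem by (simp add: \<sigma>_def)
  qed
  ultimately show ?thesis
    unfolding asym_second_tangent_cone_def using t r \<open>(\<lambda>k. t k / r k) \<longlonglongrightarrow> 0\<close> by blast
qed

lemma Dg_mem_second_tangent_set: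
  assumes "v \<in> second_tangent_set (g -` K) xbar d"
  shows "Dg xbar v + D2g xbar d d \<in> second_tangent_set K (g xbar) (Dg xbar d)"
proof -
  obtain t v' where t: "\<forall>k. t k > 0" "t \<longlonglongrightarrow> 0" and "v' \<longlonglongrightarrow> v"
    and mem: "\<forall>k. xbar + t k *\<^sub>R d + (1/2 * (t k)\<^sup>2) *\<^sub>R v' k \<in> g -` K"
    using assms unfolding second_tangent_set_def by blast
  define \<sigma> where "\<sigma> k = 1/2 * (t k)\<^sup>2" for k
  have \<sigma>: "\<sigma> k > 0" for k using t(1)[rule_format, of k] by (simp add: \<sigma>_def)
  define q where "q k = (1 / \<sigma> k) *\<^sub>R (g (xbar + t k *\<^sub>R d + \<sigma> k *\<^sub>R v' k) - g xbar - t k *\<^sub>R Dg xbar d)" for k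
  have "(t k)\<^sup>2 / \<sigma> k = 2" for k
    using t(1)[rule_format, of k] by (simp add: \<sigma>_def)
  then have "(\<lambda>k. (t k)\<^sup>2 / \<sigma> k) \<longlonglongrightarrow> 2" by simp
  moreover have "\<sigma> \<longlonglongrightarrow> 0"
    unfolding \<sigma>_def using tendsto_mult_left[OF tendsto_power[OF t(2), of 2], of "1/2"] by simp
  ultimately have "q \<longlonglongrightarrow> Dg xbar v + D2g xbar d d"
    unfolding q_def
    using second_order_expansion[OF \<sigma> t(2) _ _ \<open>v' \<longlonglongrightarrow> v\<close>, where x = xbar and d = d and a = 2] by simp
  moreover have "g xbar + t k *\<^sub>R Dg xbar d + (1/2 * (t k)\<^sup>2) *\<^sub>R q k \<in> K" for k
  proof -
    have "g xbar + t k *\<^sub>R Dg xbar d + \<sigma> k *\<^sub>R q k = g (xbar + t k *\<^sub>R d + \<sigma> k *\<^sub>R v' k)"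
      using \<sigma>[of k] by (simp add: q_def)
    then show ?thesis using mem by (simp add: \<sigma>_def)
  qed
  ultimately show ?thesis
    unfolding second_tangent_set_def using t by blast
qed

lemma asym_second_tangent_cone_error_bound:
  assumes "closed K" and "xbar \<in> g -` K"
    and EB: "\<And>w. w \<in> dir_nbhd \<rho> \<delta> d \<Longrightarrow> infdist (xbar + w) (g -` K) \<le> \<kappa> * infdist (g (xbar + w)) K"
    and "\<rho> > 0" and "\<delta> > 0" and "\<kappa> \<ge> 0"
    and nonempty: "asym_second_tangent_cone K (g xbar) (Dg xbar d) \<noteq> {}"
  shows "infdist y (asym_second_tangent_cone (g -` K) xbar d)
           \<le> \<kappa> * infdist (Dg xbar y) (asym_second_tangent_cone K (g xbar) (Dg xbar d))"
proof -
  obtain q where "q \<in> asym_second_tangent_cone K (g xbar) (Dg xbar d)"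
    and q: "infdist (Dg xbar y) (asym_second_tangent_cone K (g xbar) (Dg xbar d)) = dist (Dg xbar y) q"
    using infdist_attains_inf[OF closed_asym_second_tangent_cone nonempty] by blast
  then obtain t r qs where t: "\<forall>k. t k > 0" "t \<longlonglongrightarrow> 0" and r: "\<forall>k. r k > 0" "r \<longlonglongrightarrow> 0"
    and tr: "(\<lambda>k. t k / r k) \<longlonglongrightarrow> 0" and "qs \<longlonglongrightarrow> q"
    and qK: "\<forall>k. g xbar + t k *\<^sub>R Dg xbar d + (1/2 * t k * r k) *\<^sub>R qs k \<in> K"
    unfolding asym_second_tangent_cone_def by blast
  have "(\<lambda>k. (1/2 * t k * r k) / t k) \<longlonglongrightarrow> 0"
  proof -
    have "(\<lambda>k. (1/2 * t k * r k) / t k) = (\<lambda>k. 1/2 * r k)"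
      using t(1) by (intro ext) (simp add: less_imp_neq[symmetric])
    then show ?thesis using tendsto_mult_left[OF r(2), of "1/2"] by simp
  qed
  moreover have "(\<lambda>k. (t k)\<^sup>2 / (1/2 * t k * r k)) \<longlonglongrightarrow> 0"
  proof -
    have "(t k)\<^sup>2 / (1/2 * t k * r k) = 2 * (t k / r k)" for k
      using t(1)[rule_format, of k] by (simp add: power2_eq_square)
    then show ?thesis using tendsto_mult_left[OF tr, of 2] by simp
  qed
  moreover have "1/2 * t k * r k > 0" for k using t(1) r(1) by simp
  ultimately obtain \<phi> ys y' where \<phi>: "strict_mono \<phi>" "(ys \<circ> \<phi>) \<longlonglongrightarrow> y'"
    and y': "norm (y' - y) \<le> \<kappa> * norm (Dg xbar y + (0 / 2) *\<^sub>R D2g xbar d d - q)"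
    and ys: "\<And>k. xbar + t k *\<^sub>R d + (1/2 * t k * r k) *\<^sub>R ys k \<in> g -` K"
    using directional_error_bound_sequence[OF \<open>closed K\<close> \<open>xbar \<in> g -` K\<close> EB \<open>\<rho> > 0\<close> \<open>\<delta> > 0\<close>
        \<open>\<kappa> \<ge> 0\<close> t(1)[rule_format] t(2) _ _ _ \<open>qs \<longlonglongrightarrow> q\<close> qK[rule_format]]
    by blast
  have "y' \<in> asym_second_tangent_cone (g -` K) xbar d"
    unfolding asym_second_tangent_cone_def
    using t r LIMSEQ_subseq_LIMSEQ[OF t(2) \<phi>(1)] LIMSEQ_subseq_LIMSEQ[OF r(2) \<phi>(1)]
      LIMSEQ_subseq_LIMSEQ[OF tr \<phi>(1)] \<phi>(2) ys
    by (intro CollectI exI[of _ "t \<circ> \<phi>"] exI[of _ "r \<circ> \<phi>"] exI[of _ "ys \<circ> \<phi>"]) (simp add: o_def)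
  then have "infdist y (asym_second_tangent_cone (g -` K) xbar d) \<le> dist y y'"
    by (rule infdist_le)
  also have "\<dots> \<le> \<kappa> * dist (Dg xbar y) q"
    using y' by (simp add: dist_norm norm_minus_commute)
  finally show ?thesis using q by simp
qed

lemma second_tangent_set_error_bound:
  assumes "closed K" and "xbar \<in> g -` K"
    and EB: "\<And>w. w \<in> dir_nbhd \<rho> \<delta> d \<Longrightarrow> infdist (xbar + w) (g -` K) \<le> \<kappa> * infdist (g (xbar + w)) K"
    and "\<rho> > 0" and "\<delta> > 0" and "\<kappa> \<ge> 0"
    and nonempty: "second_tangent_set K (g xbar) (Dg xbar d) \<noteq> {}"
  shows "infdist y (second_tangent_set (g -` K) xbar d)
           \<le> \<kappa> * infdist (Dg xbar y + D2g xbar d d) (second_tangent_set K (g xbar) (Dg xbar d))"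
proof -
  obtain q where "q \<in> second_tangent_set K (g xbar) (Dg xbar d)"
    and q: "infdist (Dg xbar y + D2g xbar d d) (second_tangent_set K (g xbar) (Dg xbar d))
              = dist (Dg xbar y + D2g xbar d d) q"
    using infdist_attains_inf[OF closed_second_tangent_set nonempty] by blast
  then obtain t qs where t: "\<forall>k. t k > 0" "t \<longlonglongrightarrow> 0" and "qs \<longlonglongrightarrow> q"
    and qK: "\<forall>k. g xbar + t k *\<^sub>R Dg xbar d + (1/2 * (t k)\<^sup>2) *\<^sub>R qs k \<in> K"
    unfolding second_tangent_set_def by blast
  have "(\<lambda>k. (1/2 * (t k)\<^sup>2) / t k) \<longlonglongrightarrow> 0"
  proof -
    have "(\<lambda>k. (1/2 * (t k)\<^sup>2) / t k) = (\<lambda>k. 1/2 * t k)"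
      using t(1) by (intro ext) (simp add: power2_eq_square less_imp_neq[symmetric])
    then show ?thesis using tendsto_mult_left[OF t(2), of "1/2"] by simp
  qed
  moreover have "(\<lambda>k. (t k)\<^sup>2 / (1/2 * (t k)\<^sup>2)) \<longlonglongrightarrow> 2"
  proof -
    have "(t k)\<^sup>2 / (1/2 * (t k)\<^sup>2) = 2" for k using t(1)[rule_format, of k] by simp
    then show ?thesis by simp
  qed
  moreover have "1/2 * (t k)\<^sup>2 > 0" for k using t(1)[rule_format, of k] by simp
  ultimately obtain \<phi> ys y' where \<phi>: "strict_mono \<phi>" "(ys \<circ> \<phi>) \<longlonglongrightarrow> y'"
    and y': "norm (y' - y) \<le> \<kappa> * norm (Dg xbar y + (2 / 2) *\<^sub>R D2g xbar d d - q)"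
    and ys: "\<And>k. xbar + t k *\<^sub>R d + (1/2 * (t k)\<^sup>2) *\<^sub>R ys k \<in> g -` K"
    using directional_error_bound_sequence[OF \<open>closed K\<close> \<open>xbar \<in> g -` K\<close> EB \<open>\<rho> > 0\<close> \<open>\<delta> > 0\<close>
        \<open>\<kappa> \<ge> 0\<close> t(1)[rule_format] t(2) _ _ _ \<open>qs \<longlonglongrightarrow> q\<close> qK[rule_format]]
    by blast
  have "y' \<in> second_tangent_set (g -` K) xbar d"
    unfolding second_tangent_set_def
    using t LIMSEQ_subseq_LIMSEQ[OF t(2) \<phi>(1)] \<phi>(2) ys
    by (intro CollectI exI[of _ "t \<circ> \<phi>"] exI[of _ "ys \<circ> \<phi>"]) (simp add: o_def)
  then have "infdist y (second_tangent_set (g -` K) xbar d) \<le> dist y y'"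
    by (rule infdist_le)
  also have "\<dots> \<le> \<kappa> * dist (Dg xbar y + D2g xbar d d) q"
    using y' by (simp add: dist_norm norm_minus_commute)
  finally show ?thesis using q by simp
qed

lemma affine_error_bound_asym_second_tangent_cone:
  assumes "closed K" and "xbar \<in> g -` K" and "\<kappa> \<in> mscq_constants g K xbar d"
    and "v \<in> asym_second_tangent_cone (g -` K) xbar d"
  shows "affine_error_bound (Dg xbar) 0 (asym_second_tangent_cone (g -` K) xbar d)
           (asym_second_tangent_cone K (g xbar) (Dg xbar d)) \<kappa>"
proof (rule affine_error_bound.intro)
  show "linear (Dg xbar)" by (rule linear_Dg)
  show "y \<in> asym_second_tangent_cone (g -` K) xbar d
      \<Longrightarrow> Dg xbar y + 0 \<in> asym_second_tangent_cone K (g xbar) (Dg xbar d)" for y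
    using Dg_mem_asym_second_tangent_cone by simp
  obtain \<rho> \<delta> where "\<rho> > 0" "\<delta> > 0" "\<kappa> > 0"
    and EB: "\<And>w. w \<in> dir_nbhd \<rho> \<delta> d \<Longrightarrow> infdist (xbar + w) (g -` K) \<le> \<kappa> * infdist (g (xbar + w)) K"
    using \<open>\<kappa> \<in> mscq_constants g K xbar d\<close> unfolding mscq_constants_def by blast
  then show "0 \<le> \<kappa>" by simp
  show "infdist y (asym_second_tangent_cone (g -` K) xbar d)
      \<le> \<kappa> * infdist (Dg xbar y + 0) (asym_second_tangent_cone K (g xbar) (Dg xbar d))" for y
    using asym_second_tangent_cone_error_bound[OF \<open>closed K\<close> \<open>xbar \<in> g -` K\<close> EB \<open>\<rho> > 0\<close> \<open>\<delta> > 0\<close>]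
      Dg_mem_asym_second_tangent_cone[OF \<open>v \<in> asym_second_tangent_cone (g -` K) xbar d\<close>] \<open>\<kappa> > 0\<close>
    by fastforce
qed (fact closed_asym_second_tangent_cone)+

lemma affine_error_bound_second_tangent_set:
  assumes "closed K" and "xbar \<in> g -` K" and "\<kappa> \<in> mscq_constants g K xbar d"
    and "w \<in> second_tangent_set (g -` K) xbar d"
  shows "affine_error_bound (Dg xbar) (D2g xbar d d) (second_tangent_set (g -` K) xbar d)
           (second_tangent_set K (g xbar) (Dg xbar d)) \<kappa>"
proof (rule affine_error_bound.intro)
  show "linear (Dg xbar)" by (rule linear_Dg)
  show "y \<in> second_tangent_set (g -` K) xbar d
      \<Longrightarrow> Dg xbar y + D2g xbar d d \<in> second_tangent_set K (g xbar) (Dg xbar d)" for y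
    by (rule Dg_mem_second_tangent_set)
  obtain \<rho> \<delta> where "\<rho> > 0" "\<delta> > 0" "\<kappa> > 0"
    and EB: "\<And>w. w \<in> dir_nbhd \<rho> \<delta> d \<Longrightarrow> infdist (xbar + w) (g -` K) \<le> \<kappa> * infdist (g (xbar + w)) K"
    using \<open>\<kappa> \<in> mscq_constants g K xbar d\<close> unfolding mscq_constants_def by blast
  then show "0 \<le> \<kappa>" by simp
  show "infdist y (second_tangent_set (g -` K) xbar d)
      \<le> \<kappa> * infdist (Dg xbar y + D2g xbar d d) (second_tangent_set K (g xbar) (Dg xbar d))" for y
    using second_tangent_set_error_bound[OF \<open>closed K\<close> \<open>xbar \<in> g -` K\<close> EB \<open>\<rho> > 0\<close> \<open>\<delta> > 0\<close>]
      Dg_mem_second_tangent_set[OF \<open>w \<in> second_tangent_set (g -` K) xbar d\<close>] \<open>\<kappa> > 0\<close>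
    by fastforce
qed (fact closed_second_tangent_set)+

end

theorem proposition2p8:
  fixes g :: "'n::euclidean_space \<Rightarrow> 'm::euclidean_space"
    and Dg :: "'n \<Rightarrow> 'n \<Rightarrow> 'm"
    and D2g :: "'n \<Rightarrow> 'n \<Rightarrow> 'n \<Rightarrow> 'm"
    and K :: "'m set" and xbar d :: 'n and \<kappa> :: real
  assumes D1: "\<And>x. (g has_derivative Dg x) (at x)"
    and D2: "\<And>x h. ((\<lambda>y. Dg y h) has_derivative (\<lambda>u. D2g x u h)) (at x)"
    and D2_cont: "\<And>u h. continuous_on UNIV (\<lambda>x. D2g x u h)"
    and K_closed: "closed K"
    and xbar_in: "xbar \<in> g -` K"
    and d_tan: "d \<in> tangent_cone (g -` K) xbar"
    and mscq: "mscq_dir g K xbar d"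
    and kappa: "\<kappa> = mscq_modulus g K xbar d"
  shows "(\<forall>v \<in> asym_second_tangent_cone (g -` K) xbar d.
            limiting_normal_cone (asym_second_tangent_cone (g -` K) xbar d) v
            \<subseteq> {z. \<exists>lam \<in> limiting_normal_cone (asym_second_tangent_cone K (g xbar) (Dg xbar d)) (Dg xbar v)
                           \<inter> cball 0 (\<kappa> * norm z).
                    z = adjoint (Dg xbar) lam})
       \<and> (\<forall>w \<in> second_tangent_set (g -` K) xbar d.
            limiting_normal_cone (second_tangent_set (g -` K) xbar d) w
            \<subseteq> {z. \<exists>lam \<in> limiting_normal_cone (second_tangent_set K (g xbar) (Dg xbar d))
                                  (Dg xbar w + D2g xbar d d)
                           \<inter> cball 0 (\<kappa> * norm z).
                    z = adjoint (Dg xbar) lam})"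
proof -
  obtain \<kappa>s where \<kappa>s: "\<And>k. \<kappa>s k \<in> mscq_constants g K xbar d" and "\<kappa>s \<longlonglongrightarrow> \<kappa>"
    using mscq_constants_tendsto_modulus[OF mscq] unfolding kappa by blast
  show ?thesis
  proof (intro conjI ballI subsetI CollectI)
    fix v z
    assume "v \<in> asym_second_tangent_cone (g -` K) xbar d"
      and "z \<in> limiting_normal_cone (asym_second_tangent_cone (g -` K) xbar d) v"
    with affine_error_bound_asym_second_tangent_cone[OF D1 D2 K_closed xbar_in \<kappa>s]
    have "z \<in> adjoint (Dg xbar) ` (limiting_normal_cone (asym_second_tangent_cone K (g xbar) (Dg xbar d))
                (Dg xbar v + 0) \<inter> cball 0 (\<kappa> * norm z))"
      by (intro limiting_normal_cone_error_bound_limit[OF _ \<open>\<kappa>s \<longlonglongrightarrow> \<kappa>\<close>])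
    then show "\<exists>lam \<in> limiting_normal_cone (asym_second_tangent_cone K (g xbar) (Dg xbar d)) (Dg xbar v)
        \<inter> cball 0 (\<kappa> * norm z). z = adjoint (Dg xbar) lam"
      by auto
  next
    fix w z
    assume "w \<in> second_tangent_set (g -` K) xbar d"
      and "z \<in> limiting_normal_cone (second_tangent_set (g -` K) xbar d) w"
    with affine_error_bound_second_tangent_set[OF D1 D2 K_closed xbar_in \<kappa>s]
    have "z \<in> adjoint (Dg xbar) ` (limiting_normal_cone (second_tangent_set K (g xbar) (Dg xbar d))
                (Dg xbar w + D2g xbar d d) \<inter> cball 0 (\<kappa> * norm z))"
      by (intro limiting_normal_cone_error_bound_limit[OF _ \<open>\<kappa>s \<longlonglongrightarrow> \<kappa>\<close>])
    then show "\<exists>lam \<in> limiting_normal_cone (second_tangent_set K (g xbar) (Dg xbar d)) (Dg xbar w + D2g xbar d d)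
        \<inter> cball 0 (\<kappa> * norm z). z = adjoint (Dg xbar) lam"
      by auto
  qed
qed

end
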